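(* Assume $W_c$ satisfies Assumption 2, let $r>0$, and suppose $rH^{W_s}(M)+H^{W_c}(X|Z)<R$. Then \[ \liminf_{n\to\infty}-\frac1n\log P_j(\lfloor rn\rfloor,n)\ge\sup_{s\in(0,\frac12]}\frac{sR-U[W_s,W_c,\uparrow;r](s)}{1-s}. \]
   Context: Setup. $\mathcal M$ finite, $W_s$ an irreducible aperiodic transition matrix on $\mathcal M$; message $M^k$ with law $P_{M_1}(m_1)\prod_{i=2}^kW_s(m_i|m_{i-1})$. $\mathcal X$ a finite abelian group, $\mathcal Z$ finite, $W_c=\{W_c(x,z|x',z')\}$ an irreducible aperiodic transition matrix on $\mathcal X\times\mathcal Z$; noise $(X^n,Z^n)$ with law $P_{X_1Z_1}(x_1,z_1)\prod_{i=2}^nW_c(x_i,z_i|x_{i-1},z_{i-1})$. Channel: input $\tilde x^n$ yields output $(x^n,z^n)$ with probability $P_{X^nZ^n}(x^n-\tilde x^n,z^n)$. $P_j(k,n)$ is the minimum over codes $(\mathsf e:\mathcal M^k\to\mathcal X^n,\ \mathsf d:(\mathcal X\times\mathcal Z)^n\to\mathcal M^k)$ of the average decoding error probability. $R:=\log|\mathcal X|$. Assumption 2: either (i) for every $\theta\in(-\infty,1)$ and $z,z'$, $\sum_xW_c(x,z|x',z')^{1-\theta}$ does not depend on $x'$, or (ii) $|\mathcal Z|=1$; in either case $W_{c,Z}(z|z'):=\sum_xW_c(x,z|x',z')$ is independent of $x'$. Entrywise powers $a^t$ of transition probabilities are $0$ when $a=0$; $\lambda(A)$ denotes the Perron–Frobenius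 eigenvalue. $\theta H^{W_s}_{1-\theta}(M):=\log\lambda\big(W_s(m|m')^{1-\theta}\big)$. For transition matrices $V$ on $\mathcal Z$ with $V(z|z')>0$ whenever $W_{c,Z}(z|z')>0$: $H^{W_c|V}_{1-\theta}(X|Z):=\frac1\theta\log\lambda\big(W_c(x,z|x',z')^{1-\theta}V(z|z')^\theta\big)$, $H^{W_c,\uparrow}_{1-\theta}(X|Z):=\max_VH^{W_c|V}_{1-\theta}(X|Z)$, $H^{W_c,\downarrow}_{1-\theta}(X|Z):=H^{W_c|W_{c,Z}}_{1-\theta}(X|Z)$. $H^{W_s}(M):=\lim_{\theta\to0}H^{W_s}_{1-\theta}(M)$, $H^{W_c}(X|Z):=\lim_{\theta\to0}H^{W_c,\downarrow}_{1-\theta}(X|Z)$. $U[W_s,W_c,\uparrow;r](\theta):=r\theta H^{W_s}_{1-\theta}(M)+\theta H^{W_c,\uparrow}_{1-\theta}(X|Z)$. *)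

theory Defs
  imports "HOL-Analysis.Analysis" "HOL-Library.Extended_Real" "HOL-Library.Liminf_Limsup"
begin

text \<open>Matrices on a finite index type are functions A i j (row i, column j).
  A transition matrix W(i|j) is written W i j: probability of going from j to i.\<close>

fun mpow :: "('a::finite \<Rightarrow> 'a \<Rightarrow> real) \<Rightarrow> nat \<Rightarrow> 'a \<Rightarrow> 'a \<Rightarrow> real" where
  "mpow A 0 = (\<lambda>i j. if i = j then 1 else 0)"
| "mpow A (Suc n) = (\<lambda>i j. \<Sum>k\<in>UNIV. A i k * mpow A n k j)"

definition transition_matrix :: "('a::finite \<Rightarrow> 'a \<Rightarrow> real) \<Rightarrow> bool" where
  "transition_matrix W \<longleftrightarrow> (\<forall>i j. 0 \<le> W i j) \<and> (\<forall>j. (\<Sum>i\<in>UNIV. W i j) = 1)"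

definition irreducible_mat :: "('a::finite \<Rightarrow> 'a \<Rightarrow> real) \<Rightarrow> bool" where
  "irreducible_mat A \<longleftrightarrow> (\<forall>i j. \<exists>n>0. mpow A n i j > 0)"

definition aperiodic_mat :: "('a::finite \<Rightarrow> 'a \<Rightarrow> real) \<Rightarrow> bool" where
  "aperiodic_mat A \<longleftrightarrow> (\<forall>i. Gcd {n::nat. n > 0 \<and> mpow A n i i > 0} = 1)"

definition prob_dist :: "('a::finite \<Rightarrow> real) \<Rightarrow> bool" where
  "prob_dist p \<longleftrightarrow> (\<forall>a. 0 \<le> p a) \<and> (\<Sum>a\<in>UNIV. p a) = 1"

definition is_eigenvalue :: "('a::finite \<Rightarrow> 'a \<Rightarrow> real) \<Rightarrow> complex \<Rightarrow> bool" where
  "is_eigenvalue A c \<longleftrightarrow>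
     (\<exists>v::'a \<Rightarrow> complex. v \<noteq> (\<lambda>_. 0) \<and> (\<forall>i. (\<Sum>j\<in>UNIV. complex_of_real (A i j) * v j) = c * v i))"

definition pf_eig :: "('a::finite \<Rightarrow> 'a \<Rightarrow> real) \<Rightarrow> real" where
  "pf_eig A = Sup {cmod c | c. is_eigenvalue A c}"

fun trans_prod :: "('a \<Rightarrow> 'a \<Rightarrow> real) \<Rightarrow> 'a \<Rightarrow> 'a list \<Rightarrow> real" where
  "trans_prod W prev [] = 1"
| "trans_prod W prev (y # ys) = W y prev * trans_prod W y ys"

fun chain_prob :: "('a \<Rightarrow> real) \<Rightarrow> ('a \<Rightarrow> 'a \<Rightarrow> real) \<Rightarrow> 'a list \<Rightarrow> real" where
  "chain_prob p W [] = 1"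
| "chain_prob p W (x # xs) = p x * trans_prod W x xs"

text \<open>Average error probability of the code (e,d): message length k, block length n.
  Output (x^n,z^n) given input xt^n has probability P_{X^nZ^n}(x^n - xt^n, z^n).\<close>

definition err_prob ::
  "('m::finite \<Rightarrow> real) \<Rightarrow> ('m \<Rightarrow> 'm \<Rightarrow> real) \<Rightarrow>
   (('x::{finite,ab_group_add} \<times> 'z::finite) \<Rightarrow> real) \<Rightarrow> ('x \<times> 'z \<Rightarrow> 'x \<times> 'z \<Rightarrow> real) \<Rightarrow>
   nat \<Rightarrow> nat \<Rightarrow> ('m list \<Rightarrow> 'x list) \<Rightarrow> (('x \<times> 'z) list \<Rightarrow> 'm list) \<Rightarrow> real" where
  "err_prob PM Ws PXZ Wc k n e d =
     (\<Sum>ms\<in>{ms::'m list. length ms = k}. chain_prob PM Ws ms *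
        (\<Sum>ys\<in>{ys::('x \<times> 'z) list. length ys = n}.
           chain_prob PXZ Wc (map2 (\<lambda>(x, z) xt. (x - xt, z)) ys (e ms)) *
           (if d ys \<noteq> ms then 1 else 0)))"

definition Pj ::
  "('m::finite \<Rightarrow> real) \<Rightarrow> ('m \<Rightarrow> 'm \<Rightarrow> real) \<Rightarrow>
   (('x::{finite,ab_group_add} \<times> 'z::finite) \<Rightarrow> real) \<Rightarrow> ('x \<times> 'z \<Rightarrow> 'x \<times> 'z \<Rightarrow> real) \<Rightarrow>
   nat \<Rightarrow> nat \<Rightarrow> real" where
  "Pj PM Ws PXZ Wc k n =
     Inf {err_prob PM Ws PXZ Wc k n e d | e d. \<forall>ms. length ms = k \<longrightarrow> length (e ms) = n}"

definition WcZ :: "('x::{finite,ab_group_add} \<times> 'z::finite \<Rightarrow> 'x \<times> 'z \<Rightarrow> real) \<Rightarrow> 'z \<Rightarrow> 'z \<Rightarrow> real" where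
  "WcZ Wc z z' = (\<Sum>x\<in>UNIV. Wc (x, z) (0, z'))"

definition assumption2 :: "('x::{finite,ab_group_add} \<times> 'z::finite \<Rightarrow> 'x \<times> 'z \<Rightarrow> real) \<Rightarrow> bool" where
  "assumption2 Wc \<longleftrightarrow>
     ((\<forall>\<theta>::real. \<theta> < 1 \<longrightarrow> (\<forall>z z' x1 x2.
         (\<Sum>x\<in>UNIV. Wc (x, z) (x1, z') powr (1 - \<theta>)) = (\<Sum>x\<in>UNIV. Wc (x, z) (x2, z') powr (1 - \<theta>))))
      \<or> CARD('z) = 1)"

text \<open>theta * H^{W_s}_{1-theta}(M) = log lambda(W_s^{1-theta}).\<close>
definition theta_H_src :: "('m::finite \<Rightarrow> 'm \<Rightarrow> real) \<Rightarrow> real \<Rightarrow> real" where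
  "theta_H_src Ws \<theta> = ln (pf_eig (\<lambda>m m'. Ws m m' powr (1 - \<theta>)))"

definition H_src :: "('m::finite \<Rightarrow> 'm \<Rightarrow> real) \<Rightarrow> real \<Rightarrow> real" where
  "H_src Ws \<theta> = theta_H_src Ws \<theta> / \<theta>"

definition H_src_rate :: "('m::finite \<Rightarrow> 'm \<Rightarrow> real) \<Rightarrow> real" where
  "H_src_rate Ws = Lim (at 0) (H_src Ws)"

definition H_cond_V ::
  "('x::{finite,ab_group_add} \<times> 'z::finite \<Rightarrow> 'x \<times> 'z \<Rightarrow> real) \<Rightarrow> ('z \<Rightarrow> 'z \<Rightarrow> real) \<Rightarrow> real \<Rightarrow> real" where
  "H_cond_V Wc V \<theta> =
     ln (pf_eig (\<lambda>(x, z) (x', z'). Wc (x, z) (x', z') powr (1 - \<theta>) * V z z' powr \<theta>)) / \<theta>"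

definition admissible_V :: "('x::{finite,ab_group_add} \<times> 'z::finite \<Rightarrow> 'x \<times> 'z \<Rightarrow> real) \<Rightarrow> ('z \<Rightarrow> 'z \<Rightarrow> real) \<Rightarrow> bool" where
  "admissible_V Wc V \<longleftrightarrow> transition_matrix V \<and> (\<forall>z z'. WcZ Wc z z' > 0 \<longrightarrow> V z z' > 0)"

definition H_cond_up :: "('x::{finite,ab_group_add} \<times> 'z::finite \<Rightarrow> 'x \<times> 'z \<Rightarrow> real) \<Rightarrow> real \<Rightarrow> real" where
  "H_cond_up Wc \<theta> = (SUP V\<in>{V. admissible_V Wc V}. H_cond_V Wc V \<theta>)"

definition H_cond_down :: "('x::{finite,ab_group_add} \<times> 'z::finite \<Rightarrow> 'x \<times> 'z \<Rightarrow> real) \<Rightarrow> real \<Rightarrow> real" where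
  "H_cond_down Wc \<theta> = H_cond_V Wc (WcZ Wc) \<theta>"

definition H_cond_rate :: "('x::{finite,ab_group_add} \<times> 'z::finite \<Rightarrow> 'x \<times> 'z \<Rightarrow> real) \<Rightarrow> real" where
  "H_cond_rate Wc = Lim (at 0) (H_cond_down Wc)"

definition U_up ::
  "('m::finite \<Rightarrow> 'm \<Rightarrow> real) \<Rightarrow> ('x::{finite,ab_group_add} \<times> 'z::finite \<Rightarrow> 'x \<times> 'z \<Rightarrow> real) \<Rightarrow> real \<Rightarrow> real \<Rightarrow> real" where
  "U_up Ws Wc r \<theta> = r * theta_H_src Ws \<theta> + \<theta> * H_cond_up Wc \<theta>"

end

theory Submission
  imports Defs
begin

text \<open>Random coding with maximum-likelihood decoding (Gallager) bounds \<open>P\<^sub>j(k, n)\<close>, for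
  every \<open>0 < \<rho> \<le> 1\<close>, by \<open>(\<Sum>\<^sub>m P(m)\<^sup>1\<^sup>/\<^sup>(\<^sup>1\<^sup>+\<^sup>\<rho>\<^sup>))\<^sup>1\<^sup>+\<^sup>\<rho>\<close> times
  \<open>\<Sum>\<^sub>z (\<Sum>\<^sub>x P(x, z)\<^sup>1\<^sup>/\<^sup>(\<^sup>1\<^sup>+\<^sup>\<rho>\<^sup>))\<^sup>1\<^sup>+\<^sup>\<rho>\<close> divided by \<open>|\<X>|\<^sup>n\<^sup>\<rho>\<close>.  Both sums
  are total masses of Markov chains whose transition matrices are entrywise powers of
  \<open>W\<^sub>s\<close> and \<open>W\<^sub>c\<close>, so they grow geometrically with the Perron roots of those matrices.
  For the source this root is \<open>exp (\<theta> H\<^sub>1\<^sub>-\<^sub>\<theta>(M))\<close>.  For the noise, Assumption 2 either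
  lets one sum out \<open>x\<close> and obtain a chain on \<open>\<Z>\<close>, whose Perron root \<open>\<mu>\<close> is realised inside
  \<open>H\<^sup>\<up>\<close> by a suitable transition matrix \<open>V\<close>, or makes \<open>\<Z>\<close> trivial; in both cases
  \<open>(1 - s) log \<mu> \<le> s H\<^sup>\<up>\<^sub>1\<^sub>-\<^sub>s(X|Z)\<close> with \<open>s = \<rho> / (1 + \<rho>)\<close>.  Taking \<open>-(1/n) log\<close> gives the
  exponent for each \<open>s \<in> (0, 1/2]\<close>.\<close>

subsection \<open>Matrix powers and irreducibility\<close>

lemma sum_mult_delta_right [simp]:
  "(\<Sum>k\<in>(UNIV::'a::finite set). f k * (if k = j then 1 else 0)) = (f j :: real)"
  by (simp add: if_distrib cong: if_cong)

lemma sum_mult_delta_left [simp]: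
  "(\<Sum>k\<in>(UNIV::'a::finite set). (if i = k then 1 else 0) * f k) = (f i :: real)"
  using sum_mult_delta_right[of f i] by (simp add: mult.commute eq_commute)

lemma sum_pos_imp_pos_term:
  fixes f :: "'a \<Rightarrow> real"
  assumes "finite S" "\<And>x. x \<in> S \<Longrightarrow> 0 \<le> f x" "0 < sum f S"
  shows "\<exists>x\<in>S. 0 < f x"
  using assms sum_nonpos[of S f] by (force simp: not_less)

lemma sum_mult_sum_swap:
  "(\<Sum>k\<in>(UNIV::'a::finite set). a k * (\<Sum>l\<in>(UNIV::'b::finite set). b k l * c l))
     = (\<Sum>l\<in>UNIV. (\<Sum>k\<in>UNIV. a k * b k l) * (c l :: real))"
  by (simp add: sum_distrib_left sum_distrib_right mult.assoc sum.swap[of _ "UNIV::'a set"])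

lemma mpow_nonneg: "(\<And>i j. 0 \<le> A i j) \<Longrightarrow> 0 \<le> mpow A n i j"
  by (induction n arbitrary: i j) (auto intro!: sum_nonneg mult_nonneg_nonneg)

lemma mpow_Suc_right: "mpow A (Suc n) i j = (\<Sum>k\<in>UNIV. mpow A n i k * A k j)"
proof (induction n arbitrary: i j)
  case 0
  then show ?case by simp
next
  case (Suc n)
  have "mpow A (Suc (Suc n)) i j = (\<Sum>k\<in>UNIV. A i k * (\<Sum>l\<in>UNIV. mpow A n k l * A l j))"
    using Suc by (simp only: mpow.simps)
  also have "\<dots> = (\<Sum>l\<in>UNIV. mpow A (Suc n) i l * A l j)"
    by (simp only: sum_mult_sum_swap mpow.simps)
  finally show ?case .
qed

lemma mpow_transpose: "mpow (\<lambda>i j. A j i) n i j = mpow A n j i"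
proof (induction n arbitrary: i j)
  case (Suc n)
  have "mpow (\<lambda>i j. A j i) (Suc n) i j = (\<Sum>k\<in>UNIV. mpow A n j k * A k i)"
    by (simp only: mpow.simps Suc mult.commute)
  also have "\<dots> = mpow A (Suc n) j i" by (simp only: mpow_Suc_right)
  finally show ?case .
qed auto

lemma irreducible_transpose: "irreducible_mat A \<Longrightarrow> irreducible_mat (\<lambda>i j. A j i)"
  unfolding irreducible_mat_def using mpow_transpose[of A] by metis

lemma mpow_pos_Suc:
  assumes "\<And>i j. 0 \<le> A i j" "mpow A (Suc n) i j > 0"
  obtains k where "A i k > 0" "mpow A n k j > 0"
proof -
  obtain k where "0 < A i k * mpow A n k j"
    using sum_pos_imp_pos_term[of UNIV "\<lambda>k. A i k * mpow A n k j"] assms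
    by (auto intro!: mult_nonneg_nonneg mpow_nonneg)
  with that show ?thesis using assms(1)[of i k] mpow_nonneg[OF assms(1)] by (auto simp: zero_less_mult_iff)
qed

lemma mpow_pos_intro:
  assumes "\<And>i j. 0 \<le> A i j" "A i k > 0" "mpow A n k j > 0"
  shows "mpow A (Suc n) i j > 0"
proof -
  have "0 < A i k * mpow A n k j" using assms by simp
  also have "\<dots> \<le> (\<Sum>k\<in>UNIV. A i k * mpow A n k j)"
    by (rule member_le_sum) (auto intro!: mult_nonneg_nonneg assms(1) mpow_nonneg)
  finally show ?thesis by simp
qed

lemma mpow_pos_map:
  fixes A :: "'a::finite \<Rightarrow> 'a \<Rightarrow> real" and B :: "'b::finite \<Rightarrow> 'b \<Rightarrow> real"
  assumes "\<And>i j. 0 \<le> A i j" "\<And>i j. 0 \<le> B i j" "\<And>i j. A i j > 0 \<Longrightarrow> B (f i) (f j) > 0"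
  shows "mpow A n i j > 0 \<Longrightarrow> mpow B n (f i) (f j) > 0"
proof (induction n arbitrary: i)
  case 0
  then show ?case by (auto split: if_splits)
next
  case (Suc n)
  obtain k where "A i k > 0" "mpow A n k j > 0" using mpow_pos_Suc[OF assms(1) Suc.prems] by blast
  then have "B (f i) (f k) > 0" "mpow B n (f k) (f j) > 0" using Suc.IH assms(3) by auto
  then show ?case by (rule mpow_pos_intro[OF assms(2)])
qed

lemma irreducible_map:
  fixes A :: "'a::finite \<Rightarrow> 'a \<Rightarrow> real" and B :: "'b::finite \<Rightarrow> 'b \<Rightarrow> real"
  assumes "irreducible_mat A" "surj f"
    "\<And>i j. 0 \<le> A i j" "\<And>i j. 0 \<le> B i j" "\<And>i j. A i j > 0 \<Longrightarrow> B (f i) (f j) > 0"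
  shows "irreducible_mat B"
  unfolding irreducible_mat_def
proof (intro allI)
  fix i' j'
  obtain i j where "i' = f i" "j' = f j" using \<open>surj f\<close> by (metis surjD)
  moreover obtain n where "n > 0" "mpow A n i j > 0"
    using assms(1) unfolding irreducible_mat_def by blast
  ultimately show "\<exists>n>0. 0 < mpow B n i' j'" using mpow_pos_map[of A B f, OF assms(3-5)] by blast
qed

lemma irreducible_support:
  assumes "irreducible_mat B" "\<And>i j. 0 \<le> A i j" "\<And>i j. 0 \<le> B i j"
    "\<And>i j. B i j > 0 \<Longrightarrow> A i j > 0"
  shows "irreducible_mat A"
  using irreducible_map[of B id A] assms by simp

lemma irreducible_powr:
  assumes "\<And>i j. 0 \<le> W i j" "irreducible_mat W" "0 < t"
  shows "irreducible_mat (\<lambda>a b. W a b powr t)"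
  by (rule irreducible_support[OF assms(2)]) (use assms in auto)

lemma irreducible_col_pos:
  assumes "\<And>i j. 0 \<le> A i j" "irreducible_mat (A::'a::finite \<Rightarrow> 'a \<Rightarrow> real)"
  shows "\<exists>k. A k j > 0"
proof -
  obtain n where "n > 0" "mpow A n j j > 0" using assms(2) unfolding irreducible_mat_def by blast
  then obtain m where "mpow (\<lambda>i j. A j i) (Suc m) j j > 0"
    using mpow_transpose[of A _ j j] by (metis gr0_conv_Suc)
  then show ?thesis using mpow_pos_Suc[of "\<lambda>i j. A j i" m j j] assms(1) by blast
qed

lemma mpow_eigenvector:
  assumes "\<And>i. (\<Sum>j\<in>UNIV. A i j * u j) = \<mu> * u i"
  shows "(\<Sum>j\<in>UNIV. mpow A m i j * u j) = \<mu> ^ m * u i"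
proof (induction m arbitrary: i)
  case 0
  then show ?case by simp
next
  case (Suc m)
  have "(\<Sum>j\<in>UNIV. mpow A (Suc m) i j * u j) = (\<Sum>k\<in>UNIV. A i k * (\<Sum>j\<in>UNIV. mpow A m k j * u j))"
    by (simp only: mpow.simps sum_mult_sum_swap)
  also have "\<dots> = \<mu> ^ m * (\<Sum>k\<in>UNIV. A i k * u k)"
    by (simp add: Suc sum_distrib_left mult.left_commute)
  also have "\<dots> = \<mu> ^ Suc m * u i" using assms by simp
  finally show ?case .
qed

subsection \<open>Perron--Frobenius eigenvectors\<close>

definition prob_simplex :: "(real^'a::finite) set" where
  "prob_simplex = {v. (\<forall>i. 0 \<le> v$i) \<and> (\<Sum>i\<in>UNIV. v$i) = 1}"

lemma compact_prob_simplex: "compact prob_simplex"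
proof (subst compact_eq_bounded_closed, intro conjI)
  show "bounded (prob_simplex :: (real^'a) set)" unfolding bounded_iff
  proof (intro exI ballI)
    fix v :: "real^'a" assume "v \<in> prob_simplex"
    then have "(\<Sum>i\<in>UNIV. \<bar>v$i\<bar>) = 1" by (auto simp: prob_simplex_def)
    then show "norm v \<le> 1" using norm_le_l1_cart[of v] by simp
  qed
  have "(prob_simplex :: (real^'a) set) = {v. \<forall>i. 0 \<le> v$i} \<inter> {v. (\<Sum>i\<in>UNIV. v$i) = 1}"
    by (auto simp: prob_simplex_def)
  also have "closed \<dots>"
    by (intro closed_Int closed_Collect_all closed_Collect_le closed_Collect_eq continuous_intros
        continuous_on_component)
  finally show "closed (prob_simplex :: (real^'a) set)" .
qed

lemma convex_prob_simplex: "convex prob_simplex"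
  unfolding convex_def prob_simplex_def
  by (auto simp: sum.distrib sum_distrib_left[symmetric])

lemma uniform_in_prob_simplex: "(\<chi> i. 1 / real CARD('a::finite)) \<in> (prob_simplex :: (real^'a) set)"
  by (simp add: prob_simplex_def)

text \<open>Brouwer's theorem applied to the normalised map \<open>v \<mapsto> A v / \<bar>A v\<bar>\<^sub>1\<close> on the
  probability simplex; the normalisation is well defined because no column of \<open>A\<close> vanishes.\<close>

lemma nonneg_eigenvector_exists:
  fixes A :: "'a::finite \<Rightarrow> 'a \<Rightarrow> real"
  assumes nn: "\<And>i j. 0 \<le> A i j" and col: "\<forall>j. \<exists>k. A k j > 0"
  obtains \<mu> u j where "\<mu> > 0" "\<And>i. 0 \<le> u i" "u j > 0" "\<And>i. (\<Sum>j\<in>UNIV. A i j * u j) = \<mu> * u i"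
proof -
  define D where "D v = (\<Sum>i\<in>UNIV. \<Sum>j\<in>UNIV. A i j * v$j)" for v :: "real^'a"
  define f where "f v = (\<chi> i. (\<Sum>j\<in>UNIV. A i j * v$j) / D v)" for v :: "real^'a"
  have D_pos: "D v > 0" if "v \<in> prob_simplex" for v
  proof -
    from that have v_nn: "\<And>i. 0 \<le> v$i" and "(\<Sum>i\<in>UNIV. v$i) = 1"
      by (auto simp: prob_simplex_def)
    then obtain j where "v$j > 0" using sum_pos_imp_pos_term[of UNIV "\<lambda>i. v$i"] by auto
    moreover obtain k where "A k j > 0" using col by blast
    ultimately have "0 < A k j * v$j" by simp
    also have "\<dots> \<le> (\<Sum>j\<in>UNIV. A k j * v$j)"
      by (rule member_le_sum) (auto intro: mult_nonneg_nonneg nn v_nn)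
    also have "\<dots> \<le> D v" unfolding D_def
      by (rule member_le_sum[of k UNIV "\<lambda>i. \<Sum>j\<in>UNIV. A i j * v$j"])
         (auto intro!: sum_nonneg mult_nonneg_nonneg nn v_nn)
    finally show ?thesis .
  qed
  have "continuous_on prob_simplex f" unfolding f_def D_def
    by (intro continuous_on_vec_lambda continuous_on_divide continuous_intros continuous_on_component)
       (use D_pos in \<open>force simp: D_def\<close>)
  moreover have "f \<in> prob_simplex \<rightarrow> prob_simplex"
  proof
    fix v :: "real^'a" assume v: "v \<in> prob_simplex"
    then have "\<And>i. 0 \<le> v$i" by (auto simp: prob_simplex_def)
    then have "0 \<le> (f v)$i" for i using D_pos[OF v] unfolding f_def
      by (auto intro!: divide_nonneg_pos sum_nonneg mult_nonneg_nonneg nn)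
    moreover have "(\<Sum>i\<in>UNIV. (f v)$i) = 1" using D_pos[OF v] unfolding f_def
      by (simp add: sum_divide_distrib[symmetric] D_def)
    ultimately show "f v \<in> prob_simplex" by (auto simp: prob_simplex_def)
  qed
  ultimately obtain v where v: "v \<in> prob_simplex" "f v = v"
    using brouwer[OF compact_prob_simplex convex_prob_simplex] uniform_in_prob_simplex by blast
  have "(\<Sum>j\<in>UNIV. A i j * v$j) = D v * v$i" for i
    using D_pos[OF v(1)] arg_cong[OF v(2), of "\<lambda>v. v$i"] by (simp add: f_def field_simps)
  moreover obtain j where "v$j > 0"
    using v(1) sum_pos_imp_pos_term[of UNIV "\<lambda>i. v$i"] by (auto simp: prob_simplex_def)
  moreover have "\<And>i. 0 \<le> v$i" using v(1) by (simp add: prob_simplex_def)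
  ultimately show ?thesis using that[of "D v" "\<lambda>i. v$i" j] D_pos[OF v(1)] by blast
qed

lemma perron_right:
  fixes A :: "'a::finite \<Rightarrow> 'a \<Rightarrow> real"
  assumes nn: "\<And>i j. 0 \<le> A i j" and irr: "irreducible_mat A"
  shows "\<exists>\<mu>>0. \<exists>u. (\<forall>i. u i > 0) \<and> (\<forall>i. (\<Sum>j\<in>UNIV. A i j * u j) = \<mu> * u i)"
proof -
  have col: "\<forall>j. \<exists>k. A k j > 0" using irreducible_col_pos[OF nn irr] by blast
  obtain \<mu> u j where \<mu>: "\<mu> > 0" and u_nn: "\<And>i. 0 \<le> u i" and "u j > 0"
    and eig: "\<And>i. (\<Sum>j\<in>UNIV. A i j * u j) = \<mu> * u i"
    using nonneg_eigenvector_exists[OF nn col] by blast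
  have "u i > 0" for i
  proof -
    obtain n where "mpow A n i j > 0" using irr unfolding irreducible_mat_def by blast
    then have "0 < mpow A n i j * u j" using \<open>u j > 0\<close> by simp
    also have "\<dots> \<le> (\<Sum>k\<in>UNIV. mpow A n i k * u k)"
      by (rule member_le_sum) (auto intro!: mult_nonneg_nonneg mpow_nonneg nn u_nn)
    also have "\<dots> = \<mu> ^ n * u i" by (rule mpow_eigenvector[OF eig])
    finally show ?thesis using \<mu> by (simp add: zero_less_mult_iff)
  qed
  then show ?thesis using \<mu> eig by blast
qed

lemma eigenvalue_norm_le_sum_abs:
  fixes A :: "'a::finite \<Rightarrow> 'a \<Rightarrow> real"
  assumes "is_eigenvalue A c"
  shows "cmod c \<le> (\<Sum>i\<in>UNIV. \<Sum>j\<in>UNIV. \<bar>A i j\<bar>)"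
proof -
  obtain v where v: "v \<noteq> (\<lambda>_. 0)" "\<And>i. (\<Sum>j\<in>UNIV. complex_of_real (A i j) * v j) = c * v i"
    using assms unfolding is_eigenvalue_def by blast
  define M where "M = Max (range (\<lambda>j. cmod (v j)))"
  have "M \<in> range (\<lambda>j. cmod (v j))" unfolding M_def by (rule Max_in) auto
  then obtain i where i: "cmod (v i) = M" by auto
  have M_ge: "cmod (v j) \<le> M" for j unfolding M_def by (rule Max_ge) auto
  obtain j0 where "v j0 \<noteq> 0" using v(1) by auto
  then have M_pos: "M > 0" using M_ge[of j0] by (meson less_le_trans zero_less_norm_iff)
  have "cmod c * M = cmod (\<Sum>j\<in>UNIV. complex_of_real (A i j) * v j)"
    using i v(2) by (simp add: norm_mult)
  also have "\<dots> \<le> (\<Sum>j\<in>UNIV. \<bar>A i j\<bar> * M)"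
    by (rule order_trans[OF norm_sum sum_mono]) (simp add: norm_mult mult_left_mono M_ge)
  also have "\<dots> \<le> (\<Sum>i\<in>UNIV. \<Sum>j\<in>UNIV. \<bar>A i j\<bar>) * M"
    unfolding sum_distrib_right[symmetric] using M_pos
    by (intro mult_right_mono member_le_sum[of i UNIV "\<lambda>i. \<Sum>j\<in>UNIV. \<bar>A i j\<bar>"]) auto
  finally show ?thesis using M_pos by simp
qed

lemma is_eigenvalue_of_real:
  fixes A :: "'a::finite \<Rightarrow> 'a \<Rightarrow> real"
  assumes "u k \<noteq> 0" "\<And>i. (\<Sum>j\<in>UNIV. A i j * u j) = \<mu> * u i"
  shows "is_eigenvalue A (complex_of_real \<mu>)"
  unfolding is_eigenvalue_def
proof (intro exI[of _ "\<lambda>j. complex_of_real (u j)"] conjI allI)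
  show "(\<lambda>j. complex_of_real (u j)) \<noteq> (\<lambda>_. 0)" using assms(1) by (auto dest: fun_cong[of _ _ k])
  show "(\<Sum>j\<in>UNIV. complex_of_real (A i j) * complex_of_real (u j)) = complex_of_real \<mu> * complex_of_real (u i)"
    for i using assms(2)[of i] by (simp flip: of_real_mult of_real_sum)
qed

lemma bdd_above_eigenvalue_norms: "bdd_above {cmod c | c. is_eigenvalue (A::'a::finite \<Rightarrow> 'a \<Rightarrow> real) c}"
  using eigenvalue_norm_le_sum_abs[of A] unfolding bdd_above_def by blast

lemma eigenvalue_le_pf_eig:
  fixes A :: "'a::finite \<Rightarrow> 'a \<Rightarrow> real"
  assumes "u k \<noteq> 0" "\<And>i. (\<Sum>j\<in>UNIV. A i j * u j) = \<mu> * u i" "\<mu> \<ge> 0"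
  shows "\<mu> \<le> pf_eig A"
proof -
  have "\<mu> \<in> {cmod c | c. is_eigenvalue A c}"
    using is_eigenvalue_of_real[OF assms(1,2)] assms(3) by force
  then show ?thesis unfolding pf_eig_def by (rule cSup_upper[OF _ bdd_above_eigenvalue_norms])
qed

lemma pf_eig_pos:
  assumes "\<And>i j. 0 \<le> A i j" "irreducible_mat (A::'a::finite \<Rightarrow> 'a \<Rightarrow> real)"
  shows "pf_eig A > 0"
proof -
  obtain \<mu> u where \<mu>: "\<mu> > 0" and u: "\<And>i. u i > 0" "\<And>i. (\<Sum>j\<in>UNIV. A i j * u j) = \<mu> * u i"
    using perron_right[OF assms] by blast
  have "\<mu> \<le> pf_eig A" using u(1)[of undefined] \<mu> by (intro eigenvalue_le_pf_eig[of u undefined, OF _ u(2)]) auto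
  then show ?thesis using \<mu> by simp
qed

lemma pf_eig_le_sum_abs:
  assumes "\<And>i j. 0 \<le> A i j" "irreducible_mat (A::'a::finite \<Rightarrow> 'a \<Rightarrow> real)"
  shows "pf_eig A \<le> (\<Sum>i\<in>UNIV. \<Sum>j\<in>UNIV. \<bar>A i j\<bar>)"
proof -
  obtain \<mu> u where u: "\<And>i. u i > 0" "\<And>i. (\<Sum>j\<in>UNIV. A i j * u j) = \<mu> * u i"
    using perron_right[OF assms] by blast
  have "is_eigenvalue A (complex_of_real \<mu>)"
    using u(1)[of undefined] by (intro is_eigenvalue_of_real[of u undefined, OF _ u(2)]) auto
  then have "{cmod c | c. is_eigenvalue A c} \<noteq> {}" by blast
  then show ?thesis unfolding pf_eig_def by (rule cSup_least) (auto intro: eigenvalue_norm_le_sum_abs)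
qed

text \<open>A positive left eigenvector belongs to the Perron root: pairing it with the positive
  right eigenvector forces the two eigenvalues to agree.\<close>

lemma left_eigenvalue_le_pf_eig:
  fixes A :: "'a::finite \<Rightarrow> 'a \<Rightarrow> real"
  assumes nn: "\<And>i j. 0 \<le> A i j" and irr: "irreducible_mat A"
    and w_pos: "\<And>i. w i > 0" and w_eig: "\<And>j. (\<Sum>i\<in>UNIV. w i * A i j) = c * w j"
  shows "c \<le> pf_eig A"
proof -
  obtain \<nu> u where \<nu>: "\<nu> > 0" "\<And>i. u i > 0" "\<And>i. (\<Sum>j\<in>UNIV. A i j * u j) = \<nu> * u i"
    using perron_right[OF nn irr] by blast
  have "\<nu> * (\<Sum>i\<in>UNIV. w i * u i) = c * (\<Sum>j\<in>UNIV. w j * u j)"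
    using sum_mult_sum_swap[of w A u]
    by (simp add: \<nu> w_eig sum_distrib_left mult.assoc mult.left_commute)
  moreover have "(\<Sum>i\<in>UNIV. w i * u i) > 0" by (rule sum_pos) (auto intro: mult_pos_pos w_pos \<nu>(2))
  ultimately have "c = \<nu>" by simp
  moreover have "\<nu> \<le> pf_eig A"
    using \<nu>(1) \<nu>(2)[of undefined] by (intro eigenvalue_le_pf_eig[of u undefined, OF _ \<nu>(3)]) auto
  ultimately show ?thesis by simp
qed

lemma perron_left:
  fixes A :: "'a::finite \<Rightarrow> 'a \<Rightarrow> real"
  assumes nn: "\<And>i j. 0 \<le> A i j" and irr: "irreducible_mat A"
  obtains \<mu> w where "\<mu> > 0" "\<mu> \<le> pf_eig A" "\<And>i. w i > 0" "\<And>j. (\<Sum>i\<in>UNIV. w i * A i j) = \<mu> * w j"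
proof -
  obtain \<mu> w where "\<mu> > 0" "\<And>i. w i > 0" "\<And>i. (\<Sum>j\<in>UNIV. A j i * w j) = \<mu> * w i"
    using perron_right[of "\<lambda>i j. A j i", OF nn irreducible_transpose[OF irr]] by blast
  moreover have "(\<Sum>i\<in>UNIV. w i * A i j) = \<mu> * w j" for j
    using calculation(3)[of j] by (simp add: mult.commute)
  ultimately show ?thesis using that left_eigenvalue_le_pf_eig[OF nn irr] by blast
qed

subsection \<open>Sums of Markov chain probabilities over all sequences\<close>

lemma finite_length_lists [simp]: "finite {xs::'a::finite list. length xs = n}"
  using finite_lists_length_eq[of "UNIV::'a set" n] by simp

lemma card_length_lists: "card {xs::'a::finite list. length xs = n} = CARD('a) ^ n"
  using card_lists_length_eq[of "UNIV::'a set" n] by simp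

lemma length_lists_0: "{xs::'a list. length xs = 0} = {[]}"
  by auto

lemma sum_length_lists_Suc:
  "(\<Sum>xs\<in>{xs::'a::finite list. length xs = Suc n}. f xs)
     = (\<Sum>x\<in>UNIV. \<Sum>xs\<in>{xs. length xs = n}. f (x # xs))"
proof -
  have "{xs::'a list. length xs = Suc n} = (\<lambda>(x, xs). x # xs) ` (UNIV \<times> {xs. length xs = n})"
    by (auto simp: length_Suc_conv image_iff)
  moreover have "inj_on (\<lambda>(x, xs). x # xs) (UNIV \<times> {xs::'a list. length xs = n})"
    by (auto simp: inj_on_def)
  ultimately show ?thesis by (simp add: sum.reindex sum.cartesian_product split_def)
qed

lemma trans_prod_nonneg: "(\<And>a b. 0 \<le> W a b) \<Longrightarrow> 0 \<le> trans_prod W p xs"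
  by (induction xs arbitrary: p) auto

lemma chain_prob_nonneg: "(\<And>a. 0 \<le> p a) \<Longrightarrow> (\<And>a b. 0 \<le> W a b) \<Longrightarrow> 0 \<le> chain_prob p W xs"
  by (cases xs) (auto intro!: mult_nonneg_nonneg trans_prod_nonneg)

lemma trans_prod_powr: "trans_prod W p xs powr t = trans_prod (\<lambda>a b. W a b powr t) p xs"
  by (induction xs arbitrary: p) (auto simp: powr_mult)

lemma chain_prob_powr: "chain_prob p W xs powr t = chain_prob (\<lambda>a. p a powr t) (\<lambda>a b. W a b powr t) xs"
  by (cases xs) (auto simp: powr_mult trans_prod_powr)

text \<open>Weighting each path by \<open>w\<close> at its end makes the total mass exactly geometric with
  ratio \<open>\<mu>\<close>; the lower bound \<open>c\<close> on \<open>w\<close> then controls the unweighted mass.\<close>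

lemma sum_trans_prod_le:
  fixes A :: "'a::finite \<Rightarrow> 'a \<Rightarrow> real"
  assumes nn: "\<And>a b. 0 \<le> A a b" and w_ge: "\<And>i. c \<le> w i" and "c > 0"
    and w_eig: "\<And>j. (\<Sum>i\<in>UNIV. w i * A i j) = \<mu> * w j"
  shows "(\<Sum>xs\<in>{xs. length xs = k}. trans_prod A p xs) \<le> \<mu> ^ k * w p / c"
proof (induction k arbitrary: p)
  case 0
  then show ?case using w_ge[of p] \<open>c > 0\<close> by (simp add: length_lists_0)
next
  case (Suc k)
  have "(\<Sum>xs\<in>{xs. length xs = Suc k}. trans_prod A p xs)
      = (\<Sum>y\<in>UNIV. A y p * (\<Sum>xs\<in>{xs. length xs = k}. trans_prod A y xs))"
    by (simp add: sum_length_lists_Suc sum_distrib_left)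
  also have "\<dots> \<le> (\<Sum>y\<in>UNIV. A y p * (\<mu> ^ k * w y / c))"
    by (intro sum_mono mult_left_mono Suc nn)
  also have "\<dots> = \<mu> ^ k / c * (\<Sum>y\<in>UNIV. w y * A y p)"
    by (simp add: sum_distrib_left mult_ac)
  also have "\<dots> = \<mu> ^ Suc k * w p / c" by (simp add: w_eig)
  finally show ?case .
qed

lemma sum_chain_prob_le_geometric:
  fixes A :: "'a::finite \<Rightarrow> 'a \<Rightarrow> real"
  assumes nn: "\<And>a b. 0 \<le> A a b" and p_nn: "\<And>a. 0 \<le> p a" and w_pos: "\<And>i. w i > 0"
    and w_eig: "\<And>j. (\<Sum>i\<in>UNIV. w i * A i j) = \<mu> * w j" and "\<mu> > 0"
  obtains C where "C > 0" "\<And>k. (\<Sum>xs\<in>{xs. length xs = k}. chain_prob p A xs) \<le> C * \<mu> ^ k"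
proof -
  define c where "c = Min (range w)"
  have "c \<in> range w" unfolding c_def by (rule Min_in) auto
  then have "c > 0" using w_pos by auto
  have w_ge: "c \<le> w i" for i unfolding c_def by simp
  define D where "D = (\<Sum>x\<in>UNIV. p x * w x) / c"
  have "D \<ge> 0" unfolding D_def using \<open>c > 0\<close> p_nn w_pos
    by (intro divide_nonneg_pos sum_nonneg mult_nonneg_nonneg) (auto intro: less_imp_le)
  define C where "C = 1 + D / \<mu>"
  have bound: "(\<Sum>xs\<in>{xs. length xs = k}. chain_prob p A xs) \<le> C * \<mu> ^ k" for k
  proof (cases k)
    case 0
    then show ?thesis using \<open>D \<ge> 0\<close> \<open>\<mu> > 0\<close> by (simp add: length_lists_0 C_def)
  next
    case (Suc k')
    have "(\<Sum>xs\<in>{xs. length xs = k}. chain_prob p A xs)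
        = (\<Sum>x\<in>UNIV. p x * (\<Sum>xs\<in>{xs. length xs = k'}. trans_prod A x xs))"
      by (simp add: Suc sum_length_lists_Suc sum_distrib_left)
    also have "\<dots> \<le> (\<Sum>x\<in>UNIV. p x * (\<mu> ^ k' * w x / c))"
      by (intro sum_mono mult_left_mono sum_trans_prod_le[OF nn w_ge \<open>c > 0\<close> w_eig] p_nn)
    also have "\<dots> = D / \<mu> * \<mu> ^ k"
      using \<open>\<mu> > 0\<close> by (simp add: Suc D_def sum_distrib_left sum_divide_distrib mult_ac)
    also have "\<dots> \<le> C * \<mu> ^ k" using \<open>\<mu> > 0\<close> unfolding C_def by (intro mult_right_mono) auto
    finally show ?thesis .
  qed
  show ?thesis by (rule that[OF _ bound]) (use \<open>D \<ge> 0\<close> \<open>\<mu> > 0\<close> in \<open>simp add: C_def add_pos_nonneg\<close>)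
qed

lemma sum_chain_prob_le_pf_eig_power:
  fixes A :: "'a::finite \<Rightarrow> 'a \<Rightarrow> real"
  assumes nn: "\<And>a b. 0 \<le> A a b" and irr: "irreducible_mat A" and p_nn: "\<And>a. 0 \<le> p a"
  obtains C where "C > 0" "\<And>k. (\<Sum>xs\<in>{xs. length xs = k}. chain_prob p A xs) \<le> C * pf_eig A ^ k"
proof -
  obtain \<mu> w where \<mu>: "\<mu> > 0" "\<mu> \<le> pf_eig A" and w: "\<And>i. w i > 0" "\<And>j. (\<Sum>i\<in>UNIV. w i * A i j) = \<mu> * w j"
    by (rule perron_left[OF nn irr]) blast
  obtain C where "C > 0" and C: "\<And>k. (\<Sum>xs\<in>{xs. length xs = k}. chain_prob p A xs) \<le> C * \<mu> ^ k"
    by (rule sum_chain_prob_le_geometric[of A p, OF nn p_nn w \<mu>(1)]) blast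
  have "C * \<mu> ^ k \<le> C * pf_eig A ^ k" for k
    using \<mu> \<open>C > 0\<close> by (intro mult_left_mono power_mono) auto
  then show ?thesis by (intro that[OF \<open>C > 0\<close>] order_trans[OF C])
qed

lemma sum_trans_prod_lumped:
  fixes W :: "'x::finite \<times> 'z \<Rightarrow> 'x \<times> 'z \<Rightarrow> real"
  assumes lump: "\<And>z z' x'. (\<Sum>x\<in>UNIV. W (x, z) (x', z')) = g z z'"
  shows "length zs = m \<Longrightarrow>
    (\<Sum>xs\<in>{xs::'x list. length xs = m}. trans_prod W (x0, z0) (zip xs zs)) = trans_prod g z0 zs"
proof (induction zs arbitrary: m x0 z0)
  case Nil
  then show ?case by (simp add: length_lists_0)
next
  case (Cons z zs)
  then obtain m' where m: "m = Suc m'" "length zs = m'" by auto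
  have "(\<Sum>xs\<in>{xs::'x list. length xs = m}. trans_prod W (x0, z0) (zip xs (z # zs)))
      = (\<Sum>x\<in>UNIV. W (x, z) (x0, z0) * trans_prod g z zs)"
    by (simp add: m sum_length_lists_Suc Cons.IH[OF m(2)] flip: sum_distrib_left)
  also have "\<dots> = g z z0 * trans_prod g z zs" by (simp add: lump flip: sum_distrib_right)
  finally show ?case by simp
qed

lemma sum_chain_prob_lumped:
  fixes W :: "'x::finite \<times> 'z \<Rightarrow> 'x \<times> 'z \<Rightarrow> real"
  assumes lump: "\<And>z z' x'. (\<Sum>x\<in>UNIV. W (x, z) (x', z')) = g z z'" and "length zs = n"
  shows "(\<Sum>xs\<in>{xs::'x list. length xs = n}. chain_prob p W (zip xs zs))
    = chain_prob (\<lambda>z. \<Sum>x\<in>UNIV. p (x, z)) g zs"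
proof (cases zs)
  case Nil
  then show ?thesis using assms(2) by (simp add: length_lists_0)
next
  case (Cons z zs')
  with assms(2) obtain m where m: "n = Suc m" "length zs' = m" by auto
  have "(\<Sum>xs\<in>{xs::'x list. length xs = n}. chain_prob p W (zip xs zs))
      = (\<Sum>x\<in>UNIV. p (x, z) * trans_prod g z zs')"
    by (simp add: Cons m sum_length_lists_Suc sum_trans_prod_lumped[of W g, OF lump m(2)]
        flip: sum_distrib_left)
  then show ?thesis by (simp add: Cons sum_distrib_right)
qed

subsection \<open>Gallager's random coding bound\<close>

lemma powr_le_tangent:
  fixes x c \<rho> :: real
  assumes "0 \<le> x" "0 < c" "0 \<le> \<rho>" "\<rho> \<le> 1"
  shows "x powr \<rho> \<le> \<rho> * c powr (\<rho> - 1) * x + (1 - \<rho>) * c powr \<rho>"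
proof (cases "x = 0")
  case True
  then show ?thesis using assms by simp
next
  case False
  have "x powr \<rho> * c powr (1 - \<rho>) \<le> \<rho> * x + (1 - \<rho>) * c"
    by (rule Youngs_inequality_0) (use assms False in auto)
  also have "\<dots> = (\<rho> * c powr (\<rho> - 1) * x + (1 - \<rho>) * c powr \<rho>) * c powr (1 - \<rho>)"
    using assms by (simp add: algebra_simps flip: powr_add)
  finally show ?thesis using assms by simp
qed

lemma sum_PiE_coord:
  fixes F :: "'b \<Rightarrow> real"
  assumes "finite A" "m \<in> A" "finite B"
  shows "(\<Sum>g\<in>PiE A (\<lambda>_. B). F (g m)) = real (card B) ^ (card A - 1) * (\<Sum>b\<in>B. F b)"
proof -
  define f where "f x y = (if x = m then F y else 1)" for x y
  have "(\<Sum>g\<in>PiE A (\<lambda>_. B). F (g m)) = (\<Sum>g\<in>PiE A (\<lambda>_. B). \<Prod>x\<in>A. f x (g x))"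
    using assms by (intro sum.cong refl) (auto simp: f_def prod.delta')
  also have "\<dots> = (\<Prod>x\<in>A. \<Sum>y\<in>B. f x y)"
    by (rule prod_sum_PiE[symmetric]) (use assms in auto)
  also have "\<dots> = (\<Sum>y\<in>B. F y) * (\<Prod>x\<in>A - {m}. real (card B))"
    using assms by (simp add: prod.remove f_def)
  finally show ?thesis using assms by (simp add: card_Diff_singleton mult.commute)
qed

lemma sum_PiE_two_coords:
  fixes F G :: "'b \<Rightarrow> real"
  assumes "finite A" "m \<in> A" "m' \<in> A" "m \<noteq> m'" "finite B"
  shows "(\<Sum>g\<in>PiE A (\<lambda>_. B). F (g m) * G (g m'))
    = real (card B) ^ (card A - 2) * (\<Sum>b\<in>B. F b) * (\<Sum>b\<in>B. G b)"
proof -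
  define f where "f x y = (if x = m then F y else if x = m' then G y else 1)" for x y
  have split: "(\<Prod>x\<in>A. h x) = h m * (h m' * (\<Prod>x\<in>A - {m} - {m'}. h x))" for h :: "'a \<Rightarrow> real"
    using assms by (simp add: prod.remove[of A m] prod.remove[of "A - {m}" m'])
  have "(\<Sum>g\<in>PiE A (\<lambda>_. B). F (g m) * G (g m')) = (\<Sum>g\<in>PiE A (\<lambda>_. B). \<Prod>x\<in>A. f x (g x))"
    using assms by (intro sum.cong refl) (simp add: split f_def)
  also have "\<dots> = (\<Prod>x\<in>A. \<Sum>y\<in>B. f x y)"
    by (rule prod_sum_PiE[symmetric]) (use assms in auto)
  also have "\<dots> = (\<Sum>y\<in>B. F y) * ((\<Sum>y\<in>B. G y) * (\<Prod>x\<in>A - {m} - {m'}. real (card B)))"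
    using assms by (simp add: split f_def)
  finally show ?thesis
    using assms by (simp add: card_Diff_singleton numeral_2_eq_2 mult_ac)
qed

lemma sum_PiE_coord_mult_others:
  fixes P :: "'m \<Rightarrow> real" and a :: "'c \<Rightarrow> real"
  assumes "finite Ms" "m \<in> Ms" "finite C" "C \<noteq> {}"
  shows "(\<Sum>e\<in>PiE Ms (\<lambda>_. C). a (e m) * (\<Sum>m'\<in>Ms - {m}. P m' * a (e m')))
    = real (card C) ^ (card Ms - 1) * (\<Sum>c\<in>C. a c) * ((\<Sum>m'\<in>Ms - {m}. P m') * (\<Sum>c\<in>C. a c) / real (card C))"
proof -
  define N where "N = real (card C)"
  define A where "A = (\<Sum>c\<in>C. a c)"
  have "N > 0" using assms by (simp add: N_def card_gt_0_iff)
  have pair: "(\<Sum>e\<in>PiE Ms (\<lambda>_. C). a (e m) * a (e m')) = N ^ (card Ms - 1) * A * A / N"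
    if m': "m' \<in> Ms - {m}" for m'
  proof -
    have "card {m, m'} \<le> card Ms" by (rule card_mono) (use assms m' in auto)
    then obtain K where K: "card Ms = Suc (Suc K)" using m' by (auto simp: le_iff_add)
    have "(\<Sum>e\<in>PiE Ms (\<lambda>_. C). a (e m) * a (e m')) = N ^ K * A * A"
      using sum_PiE_two_coords[of Ms m m' C a a] assms m' by (auto simp: K N_def A_def)
    then show ?thesis using \<open>N > 0\<close> by (simp add: K)
  qed
  have "(\<Sum>e\<in>PiE Ms (\<lambda>_. C). a (e m) * (\<Sum>m'\<in>Ms - {m}. P m' * a (e m')))
      = (\<Sum>e\<in>PiE Ms (\<lambda>_. C). \<Sum>m'\<in>Ms - {m}. P m' * (a (e m) * a (e m')))"
    by (simp add: sum_distrib_left mult.left_commute)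
  also have "\<dots> = (\<Sum>m'\<in>Ms - {m}. P m' * (\<Sum>e\<in>PiE Ms (\<lambda>_. C). a (e m) * a (e m')))"
    by (subst sum.swap) (simp add: sum_distrib_left)
  also have "\<dots> = (\<Sum>m'\<in>Ms - {m}. P m') * (N ^ (card Ms - 1) * A * A / N)"
    by (simp add: pair sum_distrib_right sum_divide_distrib)
  finally show ?thesis by (simp add: N_def A_def)
qed

text \<open>Concavity of \<open>x \<mapsto> x powr \<rho>\<close>, in the form of its tangent line at \<open>S A / N\<close> (which
  dominates the mean), moves the average over codebooks inside the power.\<close>

lemma sum_PiE_gallager_term_le:
  fixes P :: "'m \<Rightarrow> real" and a :: "'c \<Rightarrow> real" and \<rho> :: real
  assumes fin: "finite Ms" and m: "m \<in> Ms" and finC: "finite C" and neC: "C \<noteq> {}"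
    and P_nn: "\<And>m. 0 \<le> P m" and a_nn: "\<And>c. 0 \<le> a c" and \<rho>: "0 < \<rho>" "\<rho> \<le> 1"
  shows "(\<Sum>e\<in>PiE Ms (\<lambda>_. C). (P m * a (e m)) * (\<Sum>m'\<in>Ms - {m}. P m' * a (e m')) powr \<rho>)
    \<le> real (card C) ^ (card Ms - 1) * P m * (\<Sum>c\<in>C. a c)
        * ((\<Sum>m\<in>Ms. P m) * (\<Sum>c\<in>C. a c) / real (card C)) powr \<rho>"
    (is "?L \<le> ?R")
proof -
  define E where "E = PiE Ms (\<lambda>_. C)"
  define N where "N = real (card C)"
  define A where "A = (\<Sum>c\<in>C. a c)"
  define S where "S = (\<Sum>m\<in>Ms. P m)"
  define X where "X e = (\<Sum>m'\<in>Ms - {m}. P m' * a (e m'))" for e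
  define c where "c = S * A / N"
  have "N > 0" using finC neC by (simp add: N_def card_gt_0_iff)
  have a_le: "a x \<le> A" if "x \<in> C" for x
    unfolding A_def by (rule member_le_sum) (use that a_nn finC in auto)
  have P_le: "P m \<le> S" unfolding S_def by (rule member_le_sum) (use m fin P_nn in auto)
  have X_nn: "0 \<le> X e" for e unfolding X_def by (intro sum_nonneg mult_nonneg_nonneg P_nn a_nn)
  consider "P m * A = 0" | "P m > 0" "A > 0"
    using P_nn[of m] sum_nonneg[of C a] a_nn by (fastforce simp: A_def)
  then show ?thesis
  proof cases
    case 1
    have "P m * a (e m) = 0" if "e \<in> E" for e
    proof -
      have "e m \<in> C" using that m by (auto simp: E_def)
      then have "0 \<le> P m * a (e m)" "P m * a (e m) \<le> P m * A"
        using a_le a_nn P_nn by (auto intro: mult_left_mono)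
      then show ?thesis using 1 by simp
    qed
    then have "?L = 0" unfolding E_def by (intro sum.neutral) simp
    then show ?thesis using 1 by (auto simp: A_def)
  next
    case 2
    then have "c > 0" using P_le \<open>N > 0\<close> by (simp add: c_def)
    define c1 where "c1 = \<rho> * c powr (\<rho> - 1)"
    define c0 where "c0 = (1 - \<rho>) * c powr \<rho>"
    have "X e powr \<rho> \<le> c1 * X e + c0" for e
      unfolding c1_def c0_def by (rule powr_le_tangent[OF X_nn \<open>c > 0\<close>]) (use \<rho> in auto)
    then have "?L \<le> (\<Sum>e\<in>E. (P m * a (e m)) * (c1 * X e + c0))"
      unfolding E_def X_def by (intro sum_mono mult_left_mono) (auto intro: mult_nonneg_nonneg P_nn a_nn)
    also have "\<dots> = P m * (c1 * (\<Sum>e\<in>E. a (e m) * X e) + c0 * (\<Sum>e\<in>E. a (e m)))"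
      by (simp add: algebra_simps sum.distrib sum_distrib_left)
    also have "\<dots> = P m * N ^ (card Ms - 1) * A * (c1 * ((S - P m) * A / N) + c0)"
      using sum_PiE_coord_mult_others[OF fin m finC neC, of a P]
        sum_PiE_coord[OF fin m finC, of a] sum_diff1[of Ms P m] fin m
      by (simp add: E_def X_def N_def A_def S_def algebra_simps)
    also have "\<dots> \<le> P m * N ^ (card Ms - 1) * A * (c1 * c + c0)"
      using 2 \<rho> \<open>N > 0\<close> P_nn[of m] unfolding c_def c1_def
      by (intro mult_left_mono add_right_mono mult_nonneg_nonneg divide_right_mono) auto
    also have "c1 * c + c0 = c powr \<rho>"
      using \<open>c > 0\<close> by (simp add: c1_def c0_def powr_diff algebra_simps)
    finally show ?thesis by (simp add: N_def A_def S_def c_def mult_ac)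
  qed
qed

lemma ml_decision_error_le:
  fixes g :: "'a \<Rightarrow> real" and t \<rho> :: real
  assumes fin: "finite Ms" and g_nn: "\<And>m. m \<in> Ms \<Longrightarrow> 0 \<le> g m"
    and m: "m \<in> Ms" and d: "d \<in> Ms" "\<forall>m'\<in>Ms. g m' \<le> g d"
    and \<rho>: "0 < \<rho>" and t: "t * (1 + \<rho>) = 1"
  shows "g m * (if d \<noteq> m then 1 else 0) \<le> g m powr t * (\<Sum>m'\<in>Ms - {m}. g m' powr t) powr \<rho>"
proof (cases "d \<noteq> m \<and> g m > 0")
  case False
  then show ?thesis using g_nn[OF m] by (auto intro!: mult_nonneg_nonneg sum_nonneg)
next
  case True
  have "t > 0" using t \<rho> zero_less_mult_iff[of t "1 + \<rho>"] by auto
  have "g m powr t \<le> g d powr t" using d True \<open>t > 0\<close> m by (intro powr_mono2) auto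
  also have "\<dots> \<le> (\<Sum>m'\<in>Ms - {m}. g m' powr t)"
    by (rule member_le_sum[of d "Ms - {m}" "\<lambda>m'. g m' powr t"]) (use d True fin in auto)
  finally have "g m powr t * (g m powr t) powr \<rho> \<le> g m powr t * (\<Sum>m'\<in>Ms - {m}. g m' powr t) powr \<rho>"
    using \<rho> True by (intro mult_left_mono powr_mono2) auto
  moreover have "g m powr t * (g m powr t) powr \<rho> = g m"
    using True t by (simp add: powr_powr flip: powr_add) (simp add: algebra_simps)
  ultimately show ?thesis using True by simp
qed

lemma ml_decoder_error_le:
  fixes P :: "'m \<Rightarrow> real" and Q :: "'y \<Rightarrow> 'c \<Rightarrow> real" and \<rho> t :: real
  assumes fin: "finite Ms" and P_nn: "\<And>m. 0 \<le> P m" and Q_nn: "\<And>y c. 0 \<le> Q y c"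
    and \<rho>: "0 < \<rho>" and t: "t * (1 + \<rho>) = 1"
    and d_ml: "\<And>y. d y \<in> Ms \<and> (\<forall>m'\<in>Ms. P m' * Q y (e m') \<le> P (d y) * Q y (e (d y)))"
  shows "(\<Sum>m\<in>Ms. P m * (\<Sum>y\<in>Y. Q y (e m) * (if d y \<noteq> m then 1 else 0)))
    \<le> (\<Sum>m\<in>Ms. \<Sum>y\<in>Y. (P m powr t * Q y (e m) powr t)
          * (\<Sum>m'\<in>Ms - {m}. P m' powr t * Q y (e m') powr t) powr \<rho>)"
proof (intro sum_mono)
  fix m assume m: "m \<in> Ms"
  have "P m * Q y (e m) * (if d y \<noteq> m then 1 else 0)
      \<le> (P m * Q y (e m)) powr t * (\<Sum>m'\<in>Ms - {m}. (P m' * Q y (e m')) powr t) powr \<rho>" for y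
    by (rule ml_decision_error_le[OF fin _ m _ _ \<rho> t]) (use d_ml P_nn Q_nn in auto)
  then show "P m * (\<Sum>y\<in>Y. Q y (e m) * (if d y \<noteq> m then 1 else 0))
      \<le> (\<Sum>y\<in>Y. (P m powr t * Q y (e m) powr t) * (\<Sum>m'\<in>Ms - {m}. P m' powr t * Q y (e m') powr t) powr \<rho>)"
    unfolding sum_distrib_left by (intro sum_mono) (simp add: powr_mult P_nn Q_nn mult.assoc)
qed

lemma exists_le_average:
  fixes f :: "'a \<Rightarrow> real"
  assumes "finite E" "E \<noteq> {}" "(\<Sum>e\<in>E. f e) \<le> real (card E) * B"
  shows "\<exists>e\<in>E. f e \<le> B"
proof (rule ccontr)
  assume "\<not> (\<exists>e\<in>E. f e \<le> B)"
  then have "(\<Sum>e\<in>E. B) < (\<Sum>e\<in>E. f e)" using assms by (intro sum_strict_mono) auto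
  then show False using assms(3) by simp
qed

text \<open>Averaging the bound of \<open>ml_decoder_error_le\<close> over all codebooks \<open>Ms \<rightarrow> C\<close>; some
  codebook does at least as well as the average.\<close>

theorem gallager_random_coding:
  fixes P :: "'m \<Rightarrow> real" and Q :: "'y \<Rightarrow> 'c \<Rightarrow> real" and \<rho> t :: real
  assumes fin: "finite Ms" and neMs: "Ms \<noteq> {}" and finC: "finite C" and neC: "C \<noteq> {}"
    and finY: "finite Y" and P_nn: "\<And>m. 0 \<le> P m" and Q_nn: "\<And>y c. 0 \<le> Q y c"
    and \<rho>: "0 < \<rho>" "\<rho> \<le> 1" and t: "t * (1 + \<rho>) = 1"
  defines "S \<equiv> \<Sum>m\<in>Ms. P m powr t"
    and "A y \<equiv> \<Sum>c\<in>C. Q y c powr t"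
  shows "\<exists>e d. (\<forall>m\<in>Ms. e m \<in> C) \<and>
    (\<Sum>m\<in>Ms. P m * (\<Sum>y\<in>Y. Q y (e m) * (if d y \<noteq> m then 1 else 0)))
      \<le> S / real (card C) * (\<Sum>y\<in>Y. A y * (S * A y / real (card C)) powr \<rho>)"
proof -
  define E where "E = PiE Ms (\<lambda>_. C)"
  define N where "N = real (card C)"
  define dec where "dec e y = (SOME m. m \<in> Ms \<and> (\<forall>m'\<in>Ms. P m' * Q y (e m') \<le> P m * Q y (e m)))"
    for e :: "'m \<Rightarrow> 'c" and y
  define err where "err e = (\<Sum>m\<in>Ms. P m * (\<Sum>y\<in>Y. Q y (e m) * (if dec e y \<noteq> m then 1 else 0)))" for e
  define T where "T e m y = (P m powr t * Q y (e m) powr t)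
    * (\<Sum>m'\<in>Ms - {m}. P m' powr t * Q y (e m') powr t) powr \<rho>" for e m y
  have "N > 0" using finC neC by (simp add: N_def card_gt_0_iff)
  have dec: "dec e y \<in> Ms \<and> (\<forall>m'\<in>Ms. P m' * Q y (e m') \<le> P (dec e y) * Q y (e (dec e y)))" for e y
  proof -
    let ?g = "\<lambda>m. P m * Q y (e m)"
    have "Max (?g ` Ms) \<in> ?g ` Ms" using fin neMs by (intro Max_in) auto
    then obtain m where "m \<in> Ms" "?g m = Max (?g ` Ms)" by auto
    then have "\<exists>m. m \<in> Ms \<and> (\<forall>m'\<in>Ms. ?g m' \<le> ?g m)" using fin by auto
    then show ?thesis unfolding dec_def by (rule someI_ex)
  qed
  have err_le: "err e \<le> (\<Sum>m\<in>Ms. \<Sum>y\<in>Y. T e m y)" for e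
    unfolding err_def T_def by (rule ml_decoder_error_le[OF fin P_nn Q_nn \<rho>(1) t dec])
  have avg: "(\<Sum>e\<in>E. T e m y) \<le> N ^ (card Ms - 1) * P m powr t * A y * (S * A y / N) powr \<rho>"
    if "m \<in> Ms" for m y
    unfolding T_def E_def N_def S_def A_def
    by (rule sum_PiE_gallager_term_le) (use fin that finC neC \<rho> in auto)
  have "(\<Sum>e\<in>E. err e) \<le> (\<Sum>m\<in>Ms. \<Sum>y\<in>Y. \<Sum>e\<in>E. T e m y)"
    using sum_mono[of E err, OF err_le]
    by (simp add: sum.swap[of _ E Ms] sum.swap[of _ E Y])
  also have "\<dots> \<le> (\<Sum>m\<in>Ms. \<Sum>y\<in>Y. N ^ (card Ms - 1) * P m powr t * A y * (S * A y / N) powr \<rho>)"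
    by (intro sum_mono avg)
  also have "\<dots> = (\<Sum>m\<in>Ms. P m powr t * (N ^ (card Ms - 1) * (\<Sum>y\<in>Y. A y * (S * A y / N) powr \<rho>)))"
    by (rule sum.cong[OF refl]) (simp add: sum_distrib_left mult_ac)
  also have "\<dots> = N ^ (card Ms - 1) * S * (\<Sum>y\<in>Y. A y * (S * A y / N) powr \<rho>)"
    unfolding sum_distrib_right[symmetric] S_def by (simp add: mult_ac)
  also have "\<dots> = real (card E) * (S / N * (\<Sum>y\<in>Y. A y * (S * A y / N) powr \<rho>))"
  proof -
    have "card Ms = Suc (card Ms - 1)" using fin neMs by (simp add: card_gt_0_iff)
    then have "N ^ card Ms = N ^ (card Ms - 1) * N" by (metis power_Suc2)
    moreover have "real (card E) = N ^ card Ms" unfolding E_def N_def using fin by (simp add: card_PiE)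
    ultimately show ?thesis using \<open>N > 0\<close> by simp
  qed
  finally have "\<exists>e\<in>E. err e \<le> S / N * (\<Sum>y\<in>Y. A y * (S * A y / N) powr \<rho>)"
    by (rule exists_le_average[rotated 2]) (use fin finC neC in \<open>auto simp: E_def PiE_eq_empty_iff intro: finite_PiE\<close>)
  then obtain e where "e \<in> E" "err e \<le> S / N * (\<Sum>y\<in>Y. A y * (S * A y / N) powr \<rho>)" ..
  then show ?thesis unfolding err_def N_def E_def by blast
qed

subsection \<open>The joint source-channel code over the additive Markov noise channel\<close>

lemma map2_noise_eq_zip:
  "length ys = length c \<Longrightarrow>
    map2 (\<lambda>(x, z) xt. (x - xt, z)) ys c = zip (map2 (-) (map fst ys) c) (map snd ys)"
  by (induction ys c rule: list_induct2) (auto split: prod.splits)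

lemma map2_diff_involutive:
  "length x0 = length c \<Longrightarrow> map2 (-) x0 (map2 (-) x0 c) = (c::'x::ab_group_add list)"
  by (induction x0 c rule: list_induct2) auto

lemma sum_length_lists_diff:
  fixes F :: "'x::{finite,ab_group_add} list \<Rightarrow> real"
  assumes "length x0 = n"
  shows "(\<Sum>c\<in>{c. length c = n}. F (map2 (-) x0 c)) = (\<Sum>c\<in>{c. length c = n}. F c)"
  by (rule sum.reindex_bij_witness[of _ "\<lambda>c. map2 (-) x0 c" "\<lambda>c. map2 (-) x0 c"])
     (use assms in \<open>auto simp: map2_diff_involutive\<close>)

lemma sum_codewords_noise_shift:
  fixes PXZ :: "'x::{finite,ab_group_add} \<times> 'z::finite \<Rightarrow> real"
  assumes "length y = n"
  shows "(\<Sum>c\<in>{c. length c = n}. chain_prob PXZ Wc (map2 (\<lambda>(x, z) xt. (x - xt, z)) y c) powr t)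
    = (\<Sum>xs\<in>{xs. length xs = n}. chain_prob PXZ Wc (zip xs (map snd y)) powr t)"
proof -
  have "(\<Sum>c\<in>{c. length c = n}. chain_prob PXZ Wc (map2 (\<lambda>(x, z) xt. (x - xt, z)) y c) powr t)
      = (\<Sum>c\<in>{c. length c = n}. chain_prob PXZ Wc (zip (map2 (-) (map fst y) c) (map snd y)) powr t)"
    using assms by (intro sum.cong refl) (simp add: map2_noise_eq_zip)
  also have "\<dots> = (\<Sum>xs\<in>{xs. length xs = n}. chain_prob PXZ Wc (zip xs (map snd y)) powr t)"
    using assms by (intro sum_length_lists_diff[of _ n "\<lambda>c. chain_prob PXZ Wc (zip c (map snd y)) powr t"]) simp
  finally show ?thesis .
qed

lemma sum_length_lists_zip:
  fixes F :: "('x::finite \<times> 'z::finite) list \<Rightarrow> real"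
  shows "(\<Sum>zs\<in>{zs::'z list. length zs = n}. \<Sum>xs\<in>{xs::'x list. length xs = n}. F (zip xs zs))
    = (\<Sum>ys\<in>{ys. length ys = n}. F ys)"
proof -
  have "(\<Sum>zs\<in>{zs::'z list. length zs = n}. \<Sum>xs\<in>{xs::'x list. length xs = n}. F (zip xs zs))
     = (\<Sum>(xs, zs)\<in>{xs::'x list. length xs = n} \<times> {zs::'z list. length zs = n}. F (zip xs zs))"
    by (subst sum.swap) (simp add: sum.cartesian_product)
  also have "\<dots> = (\<Sum>ys\<in>{ys. length ys = n}. F ys)"
    by (rule sum.reindex_bij_witness[of _ "\<lambda>ys. (map fst ys, map snd ys)" "\<lambda>(xs, zs). zip xs zs"])
       (auto simp: zip_map_fst_snd)
  finally show ?thesis .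
qed

lemma sum_length_lists_map_snd:
  fixes G :: "'z::finite list \<Rightarrow> real"
  shows "(\<Sum>ys\<in>{ys::('x::finite \<times> 'z) list. length ys = n}. G (map snd ys))
    = real CARD('x) ^ n * (\<Sum>zs\<in>{zs. length zs = n}. G zs)"
proof -
  have "(\<Sum>ys\<in>{ys::('x \<times> 'z) list. length ys = n}. G (map snd ys))
      = (\<Sum>zs\<in>{zs::'z list. length zs = n}. \<Sum>xs\<in>{xs::'x list. length xs = n}. G (map snd (zip xs zs)))"
    by (rule sum_length_lists_zip[symmetric])
  also have "\<dots> = (\<Sum>zs\<in>{zs::'z list. length zs = n}. \<Sum>xs\<in>{xs::'x list. length xs = n}. G zs)"
    by (intro sum.cong refl) simp
  finally show ?thesis by (simp add: card_length_lists sum_distrib_left)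
qed

lemma Pj_le_err_prob:
  assumes "\<And>a. 0 \<le> PM a" "\<And>a b. 0 \<le> Ws a b" "\<And>a. 0 \<le> PXZ a" "\<And>a b. 0 \<le> Wc a b"
    and "\<forall>ms. length ms = k \<longrightarrow> length (e ms) = n"
  shows "0 \<le> Pj PM Ws PXZ Wc k n" "Pj PM Ws PXZ Wc k n \<le> err_prob PM Ws PXZ Wc k n e d"
proof -
  have err_nn: "0 \<le> err_prob PM Ws PXZ Wc k n e' d'" for e' d'
    unfolding err_prob_def using assms(1-4)
    by (intro sum_nonneg mult_nonneg_nonneg chain_prob_nonneg) auto
  let ?E = "{err_prob PM Ws PXZ Wc k n e d |e d. \<forall>ms. length ms = k \<longrightarrow> length (e ms) = n}"
  have "err_prob PM Ws PXZ Wc k n e d \<in> ?E" using assms(5) by blast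
  moreover have "bdd_below ?E" using err_nn by (auto simp: bdd_below_def)
  ultimately show "Pj PM Ws PXZ Wc k n \<le> err_prob PM Ws PXZ Wc k n e d"
    unfolding Pj_def by (rule cInf_lower)
  show "0 \<le> Pj PM Ws PXZ Wc k n"
    unfolding Pj_def using \<open>err_prob PM Ws PXZ Wc k n e d \<in> ?E\<close> err_nn
    by (intro cInf_greatest) auto
qed

definition src_moment :: "('m::finite \<Rightarrow> real) \<Rightarrow> ('m \<Rightarrow> 'm \<Rightarrow> real) \<Rightarrow> real \<Rightarrow> nat \<Rightarrow> real" where
  "src_moment PM Ws t k = (\<Sum>ms\<in>{ms::'m list. length ms = k}. chain_prob PM Ws ms powr t)"

definition noise_moment ::
  "('x::finite \<times> 'z::finite \<Rightarrow> real) \<Rightarrow> ('x \<times> 'z \<Rightarrow> 'x \<times> 'z \<Rightarrow> real) \<Rightarrow> real \<Rightarrow> real \<Rightarrow> nat \<Rightarrow> real" where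
  "noise_moment PXZ Wc t p n =
     (\<Sum>zs\<in>{zs::'z list. length zs = n}.
        (\<Sum>xs\<in>{xs::'x list. length xs = n}. chain_prob PXZ Wc (zip xs zs) powr t) powr p)"

lemma Pj_le_moments:
  fixes PM :: "'m::finite \<Rightarrow> real" and Ws :: "'m \<Rightarrow> 'm \<Rightarrow> real"
    and PXZ :: "'x::{finite,ab_group_add} \<times> 'z::finite \<Rightarrow> real"
    and Wc :: "'x \<times> 'z \<Rightarrow> 'x \<times> 'z \<Rightarrow> real" and \<rho> t :: real
  assumes nn: "\<And>a. 0 \<le> PM a" "\<And>a b. 0 \<le> Ws a b" "\<And>a. 0 \<le> PXZ a" "\<And>a b. 0 \<le> Wc a b"
    and \<rho>: "0 < \<rho>" "\<rho> \<le> 1" and t: "t * (1 + \<rho>) = 1"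
  shows "Pj PM Ws PXZ Wc k n \<le>
    src_moment PM Ws t k powr (1 + \<rho>) * noise_moment PXZ Wc t (1 + \<rho>) n / (real CARD('x) ^ n) powr \<rho>"
proof -
  define Ms where "Ms = {ms::'m list. length ms = k}"
  define C where "C = {xs::'x list. length xs = n}"
  define Y where "Y = {ys::('x \<times> 'z) list. length ys = n}"
  define Q where "Q ys c = chain_prob PXZ Wc (map2 (\<lambda>(x, z) xt. (x - xt, z)) ys c)" for ys c
  define S where "S = src_moment PM Ws t k"
  define A where "A zs = (\<Sum>xs\<in>C. chain_prob PXZ Wc (zip xs zs) powr t)" for zs
  define N where "N = real CARD('x) ^ n"
  have "N > 0" by (simp add: N_def)
  have card_C: "real (card C) = N" unfolding C_def N_def by (simp add: card_length_lists)
  have "Ms \<noteq> {}" unfolding Ms_def by (auto intro: exI[of _ "replicate k undefined"])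
  moreover have "C \<noteq> {}" unfolding C_def by (auto intro: exI[of _ "replicate n 0"])
  ultimately obtain e d where e: "\<forall>m\<in>Ms. e m \<in> C" and ed:
    "(\<Sum>m\<in>Ms. chain_prob PM Ws m * (\<Sum>y\<in>Y. Q y (e m) * (if d y \<noteq> m then 1 else 0)))
      \<le> S / N * (\<Sum>y\<in>Y. (\<Sum>c\<in>C. Q y c powr t) * (S * (\<Sum>c\<in>C. Q y c powr t) / N) powr \<rho>)"
    using gallager_random_coding[of Ms C Y "chain_prob PM Ws" Q \<rho> t] \<rho> t
    unfolding S_def src_moment_def card_C[symmetric]
    by (auto simp: Ms_def C_def Y_def Q_def intro!: chain_prob_nonneg nn)
  have A_nn: "0 \<le> A zs" for zs unfolding A_def by (intro sum_nonneg) auto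
  have A_shift: "(\<Sum>c\<in>C. Q y c powr t) = A (map snd y)" if "y \<in> Y" for y
    using that unfolding Q_def C_def Y_def A_def by (simp add: sum_codewords_noise_shift)
  have "0 \<le> S" unfolding S_def src_moment_def by (intro sum_nonneg) simp
  have power_split: "a * (S * a / N) powr \<rho> = (S / N) powr \<rho> * a powr (1 + \<rho>)" if "0 \<le> a" for a
  proof -
    have "(S * a / N) powr \<rho> = (S / N) powr \<rho> * a powr \<rho>"
      using that \<open>0 \<le> S\<close> \<open>N > 0\<close> by (simp add: powr_mult[symmetric])
    then show ?thesis using that by (simp add: powr_mult_base)
  qed
  have "Pj PM Ws PXZ Wc k n \<le> err_prob PM Ws PXZ Wc k n e d"
    by (rule Pj_le_err_prob[OF nn]) (use e in \<open>auto simp: Ms_def C_def\<close>)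
  also have "\<dots> \<le> S / N * (\<Sum>y\<in>Y. A (map snd y) * (S * A (map snd y) / N) powr \<rho>)"
    using ed A_shift unfolding err_prob_def Ms_def Y_def Q_def by simp
  also have "\<dots> = S / N * (\<Sum>y\<in>Y. (S / N) powr \<rho> * A (map snd y) powr (1 + \<rho>))"
    by (simp add: power_split[OF A_nn])
  also have "\<dots> = S / N * (N * (\<Sum>zs\<in>{zs::'z list. length zs = n}. (S / N) powr \<rho> * A zs powr (1 + \<rho>)))"
    unfolding Y_def N_def by (subst sum_length_lists_map_snd) (rule refl)
  also have "\<dots> = S * (S / N) powr \<rho> * (\<Sum>zs\<in>{zs::'z list. length zs = n}. A zs powr (1 + \<rho>))"
    using \<open>N > 0\<close> by (simp add: sum_distrib_left mult.assoc)
  also have "S * (S / N) powr \<rho> = S powr (1 + \<rho>) / N powr \<rho>"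
    using \<open>0 \<le> S\<close> \<open>N > 0\<close> by (simp add: powr_divide powr_mult_base)
  finally show ?thesis by (simp add: S_def N_def noise_moment_def A_def C_def)
qed

subsection \<open>The conditional Renyi entropy \<open>H\<^sup>\<up>\<close>\<close>

definition tilted_mat ::
  "('x::{finite,ab_group_add} \<times> 'z::finite \<Rightarrow> 'x \<times> 'z \<Rightarrow> real) \<Rightarrow> ('z \<Rightarrow> 'z \<Rightarrow> real) \<Rightarrow> real
    \<Rightarrow> 'x \<times> 'z \<Rightarrow> 'x \<times> 'z \<Rightarrow> real" where
  "tilted_mat Wc V \<theta> = (\<lambda>(x, z) (x', z'). Wc (x, z) (x', z') powr (1 - \<theta>) * V z z' powr \<theta>)"

lemma H_cond_V_tilted_mat: "H_cond_V Wc V \<theta> = ln (pf_eig (tilted_mat Wc V \<theta>)) / \<theta>"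
  unfolding H_cond_V_def tilted_mat_def ..

lemma tilted_mat_apply:
  "tilted_mat Wc V \<theta> (x, z) (x', z') = Wc (x, z) (x', z') powr (1 - \<theta>) * V z z' powr \<theta>"
  unfolding tilted_mat_def by simp

lemma tilted_mat_nonneg: "0 \<le> tilted_mat Wc V \<theta> i j"
  unfolding tilted_mat_def by (cases i; cases j) auto

lemma sum_UNIV_prod:
  "(\<Sum>p\<in>(UNIV::('a::finite \<times> 'b::finite) set). f p) = (\<Sum>a\<in>UNIV. \<Sum>b\<in>UNIV. f (a, b))"
  by (simp add: sum.cartesian_product flip: UNIV_Times_UNIV)

lemma transition_matrix_nonneg: "transition_matrix W \<Longrightarrow> 0 \<le> W a b"
  unfolding transition_matrix_def by auto

lemma transition_matrix_le_1: "transition_matrix (W::'a::finite \<Rightarrow> 'a \<Rightarrow> real) \<Longrightarrow> W a b \<le> 1"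
  unfolding transition_matrix_def using member_le_sum[of a UNIV "\<lambda>i. W i b"] by fastforce

lemma tilted_mat_le_1:
  assumes "transition_matrix Wc" "transition_matrix V" "0 \<le> s" "s \<le> 1"
  shows "tilted_mat Wc V s i j \<le> 1"
proof -
  obtain x z x' z' where ij: "i = (x, z)" "j = (x', z')" by fastforce
  have "Wc (x, z) (x', z') powr (1 - s) \<le> 1" "V z z' powr s \<le> 1"
    using assms transition_matrix_nonneg[of Wc] transition_matrix_le_1[of Wc]
      transition_matrix_nonneg[of V] transition_matrix_le_1[of V]
    by (auto intro!: powr_le1)
  then show ?thesis unfolding ij tilted_mat_apply by (intro mult_le_one) auto
qed

text \<open>Under Assumption 2 the support of \<open>W\<^sub>c\<close> projects into the support of \<open>W\<^sub>c\<^sub>,\<^sub>Z\<close>;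
  in case (i) because \<open>W\<^sub>c\<^sub>,\<^sub>Z(z|z')\<close> is the column sum at any \<open>x'\<close> (take \<open>\<theta> = 0\<close>).\<close>

lemma WcZ_pos:
  fixes Wc :: "'x::{finite,ab_group_add} \<times> 'z::finite \<Rightarrow> 'x \<times> 'z \<Rightarrow> real"
  assumes tm: "transition_matrix Wc" and a2: "assumption2 Wc" and pos: "Wc (x, z) (x', z') > 0"
  shows "WcZ Wc z z' > 0"
  using a2 unfolding assumption2_def
proof
  assume "\<forall>\<theta>::real. \<theta> < 1 \<longrightarrow> (\<forall>z z' x1 x2.
    (\<Sum>x\<in>UNIV. Wc (x, z) (x1, z') powr (1 - \<theta>)) = (\<Sum>x\<in>UNIV. Wc (x, z) (x2, z') powr (1 - \<theta>)))"
  then have "(\<Sum>x\<in>UNIV. Wc (x, z) (x', z') powr 1) = (\<Sum>x\<in>UNIV. Wc (x, z) (0, z') powr 1)"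
    by (metis diff_zero zero_less_one)
  then have "(\<Sum>x\<in>UNIV. Wc (x, z) (x', z')) = WcZ Wc z z'"
    unfolding WcZ_def using transition_matrix_nonneg[OF tm] by simp
  moreover have "Wc (x, z) (x', z') \<le> (\<Sum>x\<in>UNIV. Wc (x, z) (x', z'))"
    by (rule member_le_sum) (auto intro: transition_matrix_nonneg[OF tm])
  ultimately show ?thesis using pos by simp
next
  assume "CARD('z) = 1"
  then have z_UNIV: "(UNIV::'z set) = {z}" by (metis UNIV_I card_1_singletonE singletonD)
  have "WcZ Wc z z' = (\<Sum>p\<in>UNIV. Wc p (0, z'))"
    unfolding WcZ_def sum_UNIV_prod z_UNIV by simp
  then show ?thesis using tm unfolding transition_matrix_def by simp
qed

lemma irreducible_tilted_mat:
  fixes Wc :: "'x::{finite,ab_group_add} \<times> 'z::finite \<Rightarrow> 'x \<times> 'z \<Rightarrow> real"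
  assumes tm: "transition_matrix Wc" and a2: "assumption2 Wc" and irr: "irreducible_mat Wc"
    and adm: "admissible_V Wc V"
  shows "irreducible_mat (tilted_mat Wc V \<theta>)"
proof (rule irreducible_support[OF irr tilted_mat_nonneg transition_matrix_nonneg[OF tm]])
  fix i j assume pos: "0 < Wc i j"
  obtain x z x' z' where ij: "i = (x, z)" "j = (x', z')" by fastforce
  have "V z z' > 0" using adm WcZ_pos[OF tm a2] pos unfolding admissible_V_def ij by blast
  then show "0 < tilted_mat Wc V \<theta> i j" using pos by (simp add: ij tilted_mat_apply)
qed

text \<open>The supremum defining \<open>H\<^sup>\<up>\<close> is bounded, since every tilted matrix has entries in
  \<open>[0, 1]\<close>; so any admissible \<open>V\<close> and any lower bound for the Perron root of its tilted
  matrix bound \<open>H\<^sup>\<up>\<close> from below.\<close>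

lemma ln_le_H_cond_up:
  fixes Wc :: "'x::{finite,ab_group_add} \<times> 'z::finite \<Rightarrow> 'x \<times> 'z \<Rightarrow> real"
  assumes tm: "transition_matrix Wc" and a2: "assumption2 Wc" and irr: "irreducible_mat Wc"
    and adm: "admissible_V Wc V0" and \<nu>: "0 < \<nu>" "\<nu> \<le> pf_eig (tilted_mat Wc V0 s)"
    and s: "0 < s" "s < 1"
  shows "ln \<nu> \<le> s * H_cond_up Wc s"
proof -
  define K where "K = real (CARD('x \<times> 'z)) * real (CARD('x \<times> 'z))"
  have bound: "H_cond_V Wc V s \<le> ln K / s" if "admissible_V Wc V" for V
  proof -
    let ?M = "tilted_mat Wc V s"
    have irr_M: "irreducible_mat ?M" by (rule irreducible_tilted_mat[OF tm a2 irr that])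
    have "pf_eig ?M \<le> (\<Sum>i\<in>UNIV. \<Sum>j\<in>UNIV. \<bar>?M i j\<bar>)"
      by (rule pf_eig_le_sum_abs[OF tilted_mat_nonneg irr_M])
    also have "\<dots> \<le> (\<Sum>i\<in>(UNIV::('x \<times> 'z) set). \<Sum>j\<in>(UNIV::('x \<times> 'z) set). 1)"
      using tilted_mat_le_1[OF tm _ less_imp_le[OF s(1)] less_imp_le[OF s(2)]] that
      by (intro sum_mono) (auto simp: admissible_V_def abs_of_nonneg[OF tilted_mat_nonneg])
    finally have "ln (pf_eig ?M) \<le> ln K"
      using pf_eig_pos[OF tilted_mat_nonneg irr_M] by (simp add: K_def)
    then show ?thesis unfolding H_cond_V_tilted_mat using s by (simp add: divide_right_mono)
  qed
  have "bdd_above ((\<lambda>V. H_cond_V Wc V s) ` {V. admissible_V Wc V})"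
    using bound unfolding bdd_above_def by blast
  then have "H_cond_V Wc V0 s \<le> H_cond_up Wc s"
    unfolding H_cond_up_def by (rule cSUP_upper[rotated]) (use adm in auto)
  moreover have "ln \<nu> \<le> s * H_cond_V Wc V0 s" unfolding H_cond_V_tilted_mat using \<nu> s by simp
  ultimately show ?thesis using s by (smt (verit) mult_left_mono)
qed

subsection \<open>Growth rates of the source and noise moments\<close>

lemma src_moment_le_pf_eig_power:
  assumes "transition_matrix Ws" "irreducible_mat Ws" "0 < t"
  obtains C where "C > 0" "\<And>k. src_moment PM Ws t k \<le> C * pf_eig (\<lambda>m m'. Ws m m' powr t) ^ k"
proof -
  have irr: "irreducible_mat (\<lambda>m m'. Ws m m' powr t)"
    using assms by (intro irreducible_powr) (auto intro: transition_matrix_nonneg)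
  have nn: "\<And>a b. 0 \<le> Ws a b powr t" "\<And>a. 0 \<le> PM a powr t" by simp_all
  obtain C where "C > 0" and C: "\<And>k. (\<Sum>ms\<in>{ms. length ms = k}.
      chain_prob (\<lambda>a. PM a powr t) (\<lambda>m m'. Ws m m' powr t) ms) \<le> C * pf_eig (\<lambda>m m'. Ws m m' powr t) ^ k"
    by (rule sum_chain_prob_le_pf_eig_power[of _ "\<lambda>a. PM a powr t", OF nn(1) irr nn(2)]) blast
  show ?thesis by (rule that[OF \<open>C > 0\<close>]) (use C in \<open>simp add: src_moment_def chain_prob_powr\<close>)
qed

lemma sum_powr_le_powr_sum:
  fixes f :: "'a \<Rightarrow> real"
  assumes fin: "finite A" and nn: "\<And>a. 0 \<le> f a" and p: "1 \<le> p"
  shows "(\<Sum>a\<in>A. f a powr p) \<le> (\<Sum>a\<in>A. f a) powr p"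
proof -
  define S where "S = (\<Sum>a\<in>A. f a)"
  have f_le: "f a \<le> S" if "a \<in> A" for a unfolding S_def by (rule member_le_sum) (use fin nn that in auto)
  have "(\<Sum>a\<in>A. f a powr p) = (\<Sum>a\<in>A. f a * f a powr (p - 1))"
    by (rule sum.cong[OF refl]) (use nn in \<open>simp add: powr_mult_base\<close>)
  also have "\<dots> \<le> (\<Sum>a\<in>A. f a * S powr (p - 1))"
    by (rule sum_mono) (use nn f_le p in \<open>auto intro!: mult_left_mono powr_mono2\<close>)
  also have "\<dots> = S * S powr (p - 1)" by (simp add: S_def sum_distrib_right)
  also have "\<dots> = S powr p" using sum_nonneg[of A f] nn by (simp add: S_def powr_mult_base)
  finally show ?thesis unfolding S_def .
qed

text \<open>Case (ii) of Assumption 2: with a single side-information state the constant matrix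
  \<open>V = 1\<close> is admissible, and its tilted matrix is \<open>W\<^sub>c\<^sup>1\<^sup>-\<^sup>s\<close>.\<close>

lemma noise_moment_le_geometric_single_state:
  fixes PXZ :: "'x::{finite,ab_group_add} \<times> 'z::finite \<Rightarrow> real"
    and Wc :: "'x \<times> 'z \<Rightarrow> 'x \<times> 'z \<Rightarrow> real"
  assumes tm: "transition_matrix Wc" and irr: "irreducible_mat Wc"
    and a2: "assumption2 Wc" and card_z: "CARD('z) = 1" and s: "0 < s" "s < 1"
  obtains C \<mu> where "C > 0" "\<mu> > 0" "(1 - s) * ln \<mu> \<le> s * H_cond_up Wc s"
    "\<And>n. noise_moment PXZ Wc (1 - s) (1 / (1 - s)) n \<le> C * \<mu> ^ n"
proof -
  define p where "p = 1 / (1 - s)"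
  define Wt where "Wt = tilted_mat Wc (\<lambda>_ _. 1) s"
  have Wt_eq: "Wt a b = Wc a b powr (1 - s)" for a b by (cases a; cases b) (simp add: Wt_def tilted_mat_apply)
  have adm: "admissible_V Wc (\<lambda>_ _. 1)" unfolding admissible_V_def transition_matrix_def using card_z by simp
  have irr_Wt: "irreducible_mat Wt" unfolding Wt_def by (rule irreducible_tilted_mat[OF tm a2 irr adm])
  have nn: "\<And>a b. 0 \<le> Wt a b" "\<And>a. 0 \<le> PXZ a powr (1 - s)" by (simp_all add: Wt_eq)
  obtain C where "C > 0" and C: "\<And>n. (\<Sum>ys\<in>{ys. length ys = n}.
      chain_prob (\<lambda>a. PXZ a powr (1 - s)) Wt ys) \<le> C * pf_eig Wt ^ n"
    by (rule sum_chain_prob_le_pf_eig_power[of Wt "\<lambda>a. PXZ a powr (1 - s)", OF nn(1) irr_Wt nn(2)]) blast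
  define \<kappa> where "\<kappa> = pf_eig Wt"
  have "\<kappa> > 0" unfolding \<kappa>_def by (rule pf_eig_pos[OF nn(1) irr_Wt])
  have "p \<ge> 1" using s by (simp add: p_def)
  have bound: "noise_moment PXZ Wc (1 - s) p n \<le> C powr p * (\<kappa> powr p) ^ n" for n
  proof -
    have "noise_moment PXZ Wc (1 - s) p n
        \<le> (\<Sum>zs\<in>{zs::'z list. length zs = n}. \<Sum>xs\<in>{xs::'x list. length xs = n}.
              chain_prob PXZ Wc (zip xs zs) powr (1 - s)) powr p"
      unfolding noise_moment_def by (rule sum_powr_le_powr_sum) (auto intro: sum_nonneg \<open>p \<ge> 1\<close>)
    also have "\<dots> \<le> (C * \<kappa> ^ n) powr p"
      using C[of n] \<open>p \<ge> 1\<close>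
      by (intro powr_mono2)
         (auto intro!: sum_nonneg chain_prob_nonneg simp: sum_length_lists_zip chain_prob_powr Wt_eq[abs_def] \<kappa>_def)
    also have "\<dots> = C powr p * (\<kappa> powr p) ^ n"
      using \<open>C > 0\<close> \<open>\<kappa> > 0\<close> by (simp add: powr_mult powr_realpow[symmetric] powr_powr mult.commute)
    finally show ?thesis .
  qed
  have "ln \<kappa> \<le> s * H_cond_up Wc s"
    by (rule ln_le_H_cond_up[OF tm a2 irr adm \<open>\<kappa> > 0\<close>]) (use s in \<open>auto simp: \<kappa>_def Wt_def\<close>)
  moreover have "(1 - s) * ln (\<kappa> powr p) = ln \<kappa>" using s \<open>\<kappa> > 0\<close> by (simp add: p_def ln_powr)
  ultimately show ?thesis
    using that[of "C powr p" "\<kappa> powr p"] \<open>C > 0\<close> \<open>\<kappa> > 0\<close> bound by (simp add: p_def)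
qed

lemma noise_moment_lumped:
  fixes Wc :: "'x::finite \<times> 'z::finite \<Rightarrow> 'x \<times> 'z \<Rightarrow> real"
  assumes lump: "\<And>z z' x'. (\<Sum>x\<in>UNIV. Wc (x, z) (x', z') powr t) = g z z'"
  shows "noise_moment PXZ Wc t p n = (\<Sum>zs\<in>{zs. length zs = n}.
    chain_prob (\<lambda>z. (\<Sum>x\<in>UNIV. PXZ (x, z) powr t) powr p) (\<lambda>z z'. g z z' powr p) zs)"
  unfolding noise_moment_def
proof (intro sum.cong refl)
  fix zs :: "'z list" assume "zs \<in> {zs. length zs = n}"
  then have "(\<Sum>xs\<in>{xs::'x list. length xs = n}. chain_prob PXZ Wc (zip xs zs) powr t)
      = chain_prob (\<lambda>z. \<Sum>x\<in>UNIV. PXZ (x, z) powr t) g zs"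
    unfolding chain_prob_powr by (intro sum_chain_prob_lumped[of "\<lambda>a b. Wc a b powr t" g]) (auto simp: lump)
  then show "(\<Sum>xs\<in>{xs::'x list. length xs = n}. chain_prob PXZ Wc (zip xs zs) powr t) powr p
      = chain_prob (\<lambda>z. (\<Sum>x\<in>UNIV. PXZ (x, z) powr t) powr p) (\<lambda>z z'. g z z' powr p) zs"
    by (simp add: chain_prob_powr)
qed

text \<open>\<open>V\<close> is the Doob transform of the lumped matrix \<open>g\<^sup>1\<^sup>/\<^sup>(\<^sup>1\<^sup>-\<^sup>s\<^sup>)\<close> by its left Perron
  vector \<open>w\<close>.\<close>

lemma tilted_mat_left_eigenvector:
  fixes Wc :: "'x::{finite,ab_group_add} \<times> 'z::finite \<Rightarrow> 'x \<times> 'z \<Rightarrow> real"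
  assumes lump: "\<And>z z' x'. (\<Sum>x\<in>UNIV. Wc (x, z) (x', z') powr (1 - s)) = g z z'"
    and g_nn: "\<And>z z'. 0 \<le> g z z'" and s: "0 < s" "s < 1"
    and w_pos: "\<And>z. w z > 0" and "\<mu> > 0"
    and w_eig: "\<And>z'. (\<Sum>z\<in>UNIV. w z * g z z' powr (1 / (1 - s))) = \<mu> * w z'"
  defines "V z z' \<equiv> g z z' powr (1 / (1 - s)) * w z / (\<mu> * w z')"
  shows "(\<Sum>i\<in>UNIV. w (snd i) powr (1 - s) * tilted_mat Wc V s i j) = \<mu> powr (1 - s) * w (snd j) powr (1 - s)"
proof -
  define p where "p = 1 / (1 - s)"
  define G where "G z z' = g z z' powr p" for z z'
  obtain x' z' where j: "j = (x', z')" by fastforce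
  have G_nn: "0 \<le> G z z'" for z z' by (simp add: G_def)
  have summand: "w z powr (1 - s) * V z z' powr s * g z z' = w z * G z z' / (\<mu> powr s * w z' powr s)" for z
  proof -
    have "V z z' powr s = G z z' powr s * w z powr s / (\<mu> powr s * w z' powr s)"
      unfolding V_def using G_nn w_pos \<open>\<mu> > 0\<close>
      by (simp add: powr_divide powr_mult less_imp_le G_def p_def)
    moreover have "G z z' powr s * g z z' = G z z'"
    proof -
      have "G z z' powr s * g z z' = g z z' powr (1 + p * s)"
        using g_nn by (simp add: G_def powr_powr powr_mult_base mult.commute)
      also have "1 + p * s = p" using s by (simp add: p_def field_simps)
      finally show ?thesis by (simp add: G_def)
    qed
    moreover have "w z powr (1 - s) * w z powr s = w z"
      using w_pos[of z] by (simp flip: powr_add)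
    ultimately show ?thesis by (simp add: field_simps) (metis mult.commute mult.left_commute)
  qed
  have "(\<Sum>i\<in>UNIV. w (snd i) powr (1 - s) * tilted_mat Wc V s i j)
      = (\<Sum>z\<in>UNIV. w z powr (1 - s) * V z z' powr s * (\<Sum>x\<in>UNIV. Wc (x, z) (x', z') powr (1 - s)))"
    unfolding j sum_UNIV_prod
    by (subst sum.swap) (simp add: tilted_mat_apply sum_distrib_left mult_ac)
  also have "\<dots> = (\<Sum>z\<in>UNIV. w z * G z z') / (\<mu> powr s * w z' powr s)"
    by (simp add: lump summand sum_divide_distrib)
  also have "\<dots> = \<mu> / \<mu> powr s * (w z' / w z' powr s)"
    using w_eig[of z'] by (simp add: G_def p_def)
  also have "\<dots> = \<mu> powr (1 - s) * w z' powr (1 - s)"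
    using \<open>\<mu> > 0\<close> w_pos[of z'] by (simp add: powr_diff)
  finally show ?thesis by (simp add: j)
qed

lemma admissible_V_of_left_eigenvector:
  fixes Wc :: "'x::{finite,ab_group_add} \<times> 'z::finite \<Rightarrow> 'x \<times> 'z \<Rightarrow> real"
  assumes G_nn: "\<And>z z'. 0 \<le> G z z'" and G_pos: "\<And>z z'. WcZ Wc z z' > 0 \<Longrightarrow> G z z' > 0"
    and w_pos: "\<And>z. w z > 0" and "\<mu> > 0" and w_eig: "\<And>z'. (\<Sum>z\<in>UNIV. w z * G z z') = \<mu> * w z'"
  shows "admissible_V Wc (\<lambda>z z'. G z z' * w z / (\<mu> * w z'))"
  unfolding admissible_V_def transition_matrix_def
proof (intro conjI allI impI)
  show "0 \<le> G z z' * w z / (\<mu> * w z')" for z z'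
    using G_nn w_pos \<open>\<mu> > 0\<close> by (intro divide_nonneg_pos mult_nonneg_nonneg) (auto intro: less_imp_le)
  show "(\<Sum>z\<in>UNIV. G z z' * w z / (\<mu> * w z')) = 1" for z'
    using w_eig[of z'] w_pos[of z'] \<open>\<mu> > 0\<close> by (simp add: sum_divide_distrib[symmetric] mult.commute)
  show "0 < G z z' * w z / (\<mu> * w z')" if "0 < WcZ Wc z z'" for z z'
    using G_pos[OF that] w_pos \<open>\<mu> > 0\<close> by simp
qed

text \<open>Case (i) of Assumption 2: the noise lumps onto its \<open>z\<close>-component.\<close>

lemma noise_moment_le_geometric_lumpable:
  fixes PXZ :: "'x::{finite,ab_group_add} \<times> 'z::finite \<Rightarrow> real"
    and Wc :: "'x \<times> 'z \<Rightarrow> 'x \<times> 'z \<Rightarrow> real"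
  assumes tm: "transition_matrix Wc" and irr: "irreducible_mat Wc" and a2: "assumption2 Wc"
    and lumpable: "\<And>z z' x1 x2.
      (\<Sum>x\<in>UNIV. Wc (x, z) (x1, z') powr (1 - s)) = (\<Sum>x\<in>UNIV. Wc (x, z) (x2, z') powr (1 - s))"
    and s: "0 < s" "s < 1"
  obtains C \<mu> where "C > 0" "\<mu> > 0" "(1 - s) * ln \<mu> \<le> s * H_cond_up Wc s"
    "\<And>n. noise_moment PXZ Wc (1 - s) (1 / (1 - s)) n \<le> C * \<mu> ^ n"
proof -
  define g where "g z z' = (\<Sum>x\<in>UNIV. Wc (x, z) (0, z') powr (1 - s))" for z z'
  define G where "G z z' = g z z' powr (1 / (1 - s))" for z z'
  have lump: "(\<Sum>x\<in>UNIV. Wc (x, z) (x', z') powr (1 - s)) = g z z'" for z z' x'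
    unfolding g_def by (rule lumpable)
  have g_nn: "0 \<le> g z z'" for z z' unfolding g_def by (intro sum_nonneg) simp
  have G_nn: "0 \<le> G z z'" for z z' by (simp add: G_def)
  have G_pos: "G z z' > 0" if pos: "WcZ Wc z z' > 0" for z z'
  proof -
    obtain x where "Wc (x, z) (0, z') > 0"
      using pos sum_pos_imp_pos_term[of UNIV "\<lambda>x. Wc (x, z) (0, z')"] transition_matrix_nonneg[OF tm]
      unfolding WcZ_def by auto
    then have "0 < Wc (x, z) (0, z') powr (1 - s)" by simp
    also have "\<dots> \<le> g z z'" unfolding g_def by (rule member_le_sum) auto
    finally show ?thesis by (simp add: G_def)
  qed
  have "surj (snd :: 'x \<times> 'z \<Rightarrow> 'z)" by (metis surjI snd_conv)
  then have "irreducible_mat G"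
    by (rule irreducible_map[OF irr _ transition_matrix_nonneg[OF tm] G_nn])
       (use WcZ_pos[OF tm a2] G_pos in fastforce)
  then obtain \<mu> w where \<mu>: "\<mu> > 0" and w: "\<And>z. w z > 0" "\<And>z'. (\<Sum>z\<in>UNIV. w z * G z z') = \<mu> * w z'"
    by (rule perron_left[OF G_nn]) blast
  obtain C where "C > 0" and C: "\<And>n. (\<Sum>zs\<in>{zs. length zs = n}.
      chain_prob (\<lambda>z. (\<Sum>x\<in>UNIV. PXZ (x, z) powr (1 - s)) powr (1 / (1 - s))) G zs) \<le> C * \<mu> ^ n"
    by (rule sum_chain_prob_le_geometric[of G "\<lambda>z. (\<Sum>x\<in>UNIV. PXZ (x, z) powr (1 - s)) powr (1 / (1 - s))",
          OF G_nn _ w \<mu>]) auto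
  have bound: "noise_moment PXZ Wc (1 - s) (1 / (1 - s)) n \<le> C * \<mu> ^ n" for n
    using C[of n] by (simp add: noise_moment_lumped[of Wc "1 - s" g, OF lump] G_def[abs_def])
  define V where "V z z' = G z z' * w z / (\<mu> * w z')" for z z'
  have adm: "admissible_V Wc V"
    unfolding V_def by (rule admissible_V_of_left_eigenvector[OF G_nn G_pos w(1) \<mu> w(2)])
  have y_pos: "0 < w (snd i) powr (1 - s)" for i :: "'x \<times> 'z" using w(1)[of "snd i"] by simp
  have y_eig: "(\<Sum>i\<in>UNIV. w (snd i) powr (1 - s) * tilted_mat Wc V s i j)
      = \<mu> powr (1 - s) * w (snd j) powr (1 - s)" for j
    using tilted_mat_left_eigenvector[of Wc s g w \<mu>, OF lump g_nn s w(1) \<mu>] w(2)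
    by (simp add: G_def V_def[abs_def])
  have "\<mu> powr (1 - s) \<le> pf_eig (tilted_mat Wc V s)"
    by (rule left_eigenvalue_le_pf_eig[OF tilted_mat_nonneg irreducible_tilted_mat[OF tm a2 irr adm] y_pos y_eig])
  then have "ln (\<mu> powr (1 - s)) \<le> s * H_cond_up Wc s"
    by (intro ln_le_H_cond_up[OF tm a2 irr adm]) (use \<mu> s in auto)
  then have "(1 - s) * ln \<mu> \<le> s * H_cond_up Wc s" using \<mu> by (simp add: ln_powr)
  then show ?thesis using that \<open>C > 0\<close> \<mu> bound by blast
qed

lemma noise_moment_le_geometric:
  fixes PXZ :: "'x::{finite,ab_group_add} \<times> 'z::finite \<Rightarrow> real"
    and Wc :: "'x \<times> 'z \<Rightarrow> 'x \<times> 'z \<Rightarrow> real"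
  assumes "transition_matrix Wc" "irreducible_mat Wc" "assumption2 Wc" "0 < s" "s < 1"
  obtains C \<mu> where "C > 0" "\<mu> > 0" "(1 - s) * ln \<mu> \<le> s * H_cond_up Wc s"
    "\<And>n. noise_moment PXZ Wc (1 - s) (1 / (1 - s)) n \<le> C * \<mu> ^ n"
proof (cases "CARD('z) = 1")
  case True
  show ?thesis by (rule noise_moment_le_geometric_single_state[OF assms(1-3) True assms(4,5)]) (rule that)
next
  case False
  then have "\<forall>\<theta>::real. \<theta> < 1 \<longrightarrow> (\<forall>z z' x1 x2.
      (\<Sum>x\<in>UNIV. Wc (x, z) (x1, z') powr (1 - \<theta>)) = (\<Sum>x\<in>UNIV. Wc (x, z) (x2, z') powr (1 - \<theta>)))"
    using assms(3) unfolding assumption2_def by blast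
  then have lumpable: "(\<Sum>x\<in>UNIV. Wc (x, z) (x1, z') powr (1 - s))
      = (\<Sum>x\<in>UNIV. Wc (x, z) (x2, z') powr (1 - s))" for z z' x1 x2
    using assms(5) by blast
  show ?thesis
    by (rule noise_moment_le_geometric_lumpable[of Wc s, OF assms(1-3) lumpable assms(4,5)]) (rule that)
qed

subsection \<open>The error exponent\<close>

lemma liminf_neg_ln_div_ge:
  fixes P B :: "nat \<Rightarrow> real"
  assumes "\<forall>\<^sub>F n in sequentially. 0 \<le> P n \<and> P n \<le> B n"
    and "(\<lambda>n. - ln (B n) / real n) \<longlonglongrightarrow> L"
  shows "ereal L \<le> liminf (\<lambda>n. if P n = 0 then \<infinity> else ereal (- ln (P n) / real n))"
proof -
  have ev: "\<forall>\<^sub>F n in sequentially. ereal (- ln (B n) / real n)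
      \<le> (if P n = 0 then \<infinity> else ereal (- ln (P n) / real n))"
    using assms(1) eventually_gt_at_top[of 0]
  proof eventually_elim
    case (elim n)
    show ?case
    proof (cases "P n = 0")
      case False
      then have "ln (P n) \<le> ln (B n)" using elim by simp
      then show ?thesis using False elim by (simp add: divide_right_mono)
    qed simp
  qed
  have "liminf (\<lambda>n. ereal (- ln (B n) / real n)) = ereal L"
    by (rule lim_imp_Liminf[OF trivial_limit_sequentially tendsto_ereal[OF assms(2)]])
  then show ?thesis using Liminf_mono[OF ev] by simp
qed

lemma nat_floor_mult_div_tendsto:
  assumes r: "r > 0"
  shows "(\<lambda>n. real (nat \<lfloor>r * real n\<rfloor>) / real n) \<longlonglongrightarrow> r"
proof (rule tendsto_sandwich[of "\<lambda>n. r - 1 / real n" _ _ "\<lambda>n. r"])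
  have floor_bounds: "r * real n - 1 \<le> real (nat \<lfloor>r * real n\<rfloor>)" "real (nat \<lfloor>r * real n\<rfloor>) \<le> r * real n"
    for n
  proof -
    have "real (nat \<lfloor>r * real n\<rfloor>) = real_of_int \<lfloor>r * real n\<rfloor>" using r by simp
    then show "r * real n - 1 \<le> real (nat \<lfloor>r * real n\<rfloor>)" "real (nat \<lfloor>r * real n\<rfloor>) \<le> r * real n"
      using of_int_floor_le[of "r * real n"] by linarith+
  qed
  show "\<forall>\<^sub>F n in sequentially. r - 1 / real n \<le> real (nat \<lfloor>r * real n\<rfloor>) / real n"
    using eventually_gt_at_top[of 0]
  proof eventually_elim
    case (elim n)
    then have "r - 1 / real n = (r * real n - 1) / real n" by (simp add: field_simps)
    also have "\<dots> \<le> real (nat \<lfloor>r * real n\<rfloor>) / real n"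
      using elim floor_bounds(1) by (intro divide_right_mono) auto
    finally show ?case .
  qed
  show "\<forall>\<^sub>F n in sequentially. real (nat \<lfloor>r * real n\<rfloor>) / real n \<le> r"
    using eventually_gt_at_top[of 0]
    by eventually_elim (use floor_bounds in \<open>simp add: field_simps\<close>)
  show "(\<lambda>n. r - 1 / real n) \<longlonglongrightarrow> r"
    using tendsto_diff[OF tendsto_const lim_const_over_n[of 1]] by simp
qed simp

lemma neg_ln_geometric_bound_div_tendsto:
  fixes C1 C2 \<kappa> \<mu> N p \<rho> :: real
  assumes pos: "C1 > 0" "\<kappa> > 0" "C2 > 0" "\<mu> > 0" "N > 0"
    and k: "(\<lambda>n. real (k n) / real n) \<longlonglongrightarrow> r"
  shows "(\<lambda>n. - ln ((C1 * \<kappa> ^ k n) powr p * (C2 * \<mu> ^ n) / (N ^ n) powr \<rho>) / real n)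
    \<longlonglongrightarrow> \<rho> * ln N - p * r * ln \<kappa> - ln \<mu>"
proof -
  define f where "f n = \<rho> * ln N - p * (ln C1 / real n) - p * (real (k n) / real n) * ln \<kappa>
    - ln C2 / real n - ln \<mu>" for n
  have "f \<longlonglongrightarrow> \<rho> * ln N - p * 0 - p * r * ln \<kappa> - 0 - ln \<mu>"
    unfolding f_def by (intro tendsto_intros k lim_const_over_n)
  moreover have "\<forall>\<^sub>F n in sequentially.
      f n = - ln ((C1 * \<kappa> ^ k n) powr p * (C2 * \<mu> ^ n) / (N ^ n) powr \<rho>) / real n"
    using eventually_gt_at_top[of 0]
  proof eventually_elim
    case (elim n)
    have ln_eq: "ln ((C1 * \<kappa> ^ k n) powr p * (C2 * \<mu> ^ n) / (N ^ n) powr \<rho>)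
        = p * (ln C1 + real (k n) * ln \<kappa>) + ln C2 + real n * ln \<mu> - \<rho> * (real n * ln N)"
      using pos by (simp add: ln_mult ln_div ln_powr ln_realpow)
    show ?case unfolding ln_eq f_def using elim by (simp add: field_simps)
  qed
  ultimately show ?thesis by (simp add: tendsto_cong)
qed

lemma Pj_le_geometric:
  fixes PM :: "'m::finite \<Rightarrow> real" and Ws :: "'m \<Rightarrow> 'm \<Rightarrow> real"
    and PXZ :: "'x::{finite,ab_group_add} \<times> 'z::finite \<Rightarrow> real"
    and Wc :: "'x \<times> 'z \<Rightarrow> 'x \<times> 'z \<Rightarrow> real"
  assumes pdM: "prob_dist PM" and tmS: "transition_matrix Ws" and irrS: "irreducible_mat Ws"
    and pdX: "prob_dist PXZ" and tmC: "transition_matrix Wc" and irrC: "irreducible_mat Wc"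
    and a2: "assumption2 Wc" and s: "0 < s" "s \<le> 1/2"
  defines "\<kappa> \<equiv> pf_eig (\<lambda>m m'. Ws m m' powr (1 - s))"
  obtains C1 C2 \<mu> where "C1 > 0" "C2 > 0" "\<mu> > 0" "(1 - s) * ln \<mu> \<le> s * H_cond_up Wc s"
    "\<And>k n. 0 \<le> Pj PM Ws PXZ Wc k n"
    "\<And>k n. Pj PM Ws PXZ Wc k n
       \<le> (C1 * \<kappa> ^ k) powr (1 / (1 - s)) * (C2 * \<mu> ^ n) / (real CARD('x) ^ n) powr (s / (1 - s))"
proof -
  define \<rho> where "\<rho> = s / (1 - s)"
  have \<rho>: "0 < \<rho>" "\<rho> \<le> 1" "(1 - s) * (1 + \<rho>) = 1" and p: "1 + \<rho> = 1 / (1 - s)"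
    using s by (auto simp: \<rho>_def field_simps)
  have nn: "\<And>a. 0 \<le> PM a" "\<And>a b. 0 \<le> Ws a b" "\<And>a. 0 \<le> PXZ a" "\<And>a b. 0 \<le> Wc a b"
    using pdM pdX tmS tmC by (auto simp: prob_dist_def transition_matrix_def)
  have s': "0 < 1 - s" "s < 1" using s by auto
  obtain C1 where "C1 > 0" and src: "\<And>k. src_moment PM Ws (1 - s) k \<le> C1 * \<kappa> ^ k"
    unfolding \<kappa>_def by (rule src_moment_le_pf_eig_power[OF tmS irrS s'(1)]) blast
  obtain C2 \<mu> where "C2 > 0" "\<mu> > 0" and \<mu>: "(1 - s) * ln \<mu> \<le> s * H_cond_up Wc s"
    and noise: "\<And>n. noise_moment PXZ Wc (1 - s) (1 + \<rho>) n \<le> C2 * \<mu> ^ n"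
    unfolding p by (rule noise_moment_le_geometric[OF tmC irrC a2 s(1) s'(2)]) blast
  have Pj_nn: "0 \<le> Pj PM Ws PXZ Wc k n" for k n
    by (rule Pj_le_err_prob(1)[OF nn, of _ "\<lambda>_. replicate n 0"]) simp
  have "Pj PM Ws PXZ Wc k n
      \<le> (C1 * \<kappa> ^ k) powr (1 + \<rho>) * (C2 * \<mu> ^ n) / (real CARD('x) ^ n) powr \<rho>" for k n
  proof -
    have "0 \<le> src_moment PM Ws (1 - s) k" "0 \<le> noise_moment PXZ Wc (1 - s) (1 + \<rho>) n"
      unfolding src_moment_def noise_moment_def by (auto intro: sum_nonneg)
    moreover have "src_moment PM Ws (1 - s) k powr (1 + \<rho>) \<le> (C1 * \<kappa> ^ k) powr (1 + \<rho>)"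
      using src[of k] \<rho>(1) calculation(1) by (intro powr_mono2) auto
    ultimately have "src_moment PM Ws (1 - s) k powr (1 + \<rho>) * noise_moment PXZ Wc (1 - s) (1 + \<rho>) n
        \<le> (C1 * \<kappa> ^ k) powr (1 + \<rho>) * (C2 * \<mu> ^ n)"
      using noise[of n] by (intro mult_mono) auto
    then have "src_moment PM Ws (1 - s) k powr (1 + \<rho>) * noise_moment PXZ Wc (1 - s) (1 + \<rho>) n
        / (real CARD('x) ^ n) powr \<rho> \<le> (C1 * \<kappa> ^ k) powr (1 + \<rho>) * (C2 * \<mu> ^ n) / (real CARD('x) ^ n) powr \<rho>"
      by (rule divide_right_mono) simp
    then show ?thesis
      using Pj_le_moments[where PM = PM and Ws = Ws and PXZ = PXZ and Wc = Wc and k = k and n = n,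
          OF nn \<rho>(1,2) \<rho>(3)] by linarith
  qed
  then have "Pj PM Ws PXZ Wc k n
      \<le> (C1 * \<kappa> ^ k) powr (1 / (1 - s)) * (C2 * \<mu> ^ n) / (real CARD('x) ^ n) powr (s / (1 - s))" for k n
    unfolding p[symmetric] \<rho>_def[symmetric] .
  then show ?thesis using that[OF \<open>C1 > 0\<close> \<open>C2 > 0\<close> \<open>\<mu> > 0\<close> \<mu> Pj_nn] by blast
qed

lemma error_exponent_ge:
  fixes PM :: "'m::finite \<Rightarrow> real" and Ws :: "'m \<Rightarrow> 'm \<Rightarrow> real"
    and PXZ :: "'x::{finite,ab_group_add} \<times> 'z::finite \<Rightarrow> real"
    and Wc :: "'x \<times> 'z \<Rightarrow> 'x \<times> 'z \<Rightarrow> real"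
  assumes "prob_dist PM" "transition_matrix Ws" "irreducible_mat Ws"
    and "prob_dist PXZ" "transition_matrix Wc" "irreducible_mat Wc"
    and "assumption2 Wc" and r: "r > 0" and s: "0 < s" "s \<le> 1/2"
  shows "ereal ((s * ln (real CARD('x)) - U_up Ws Wc r s) / (1 - s))
    \<le> liminf (\<lambda>n. if Pj PM Ws PXZ Wc (nat \<lfloor>r * real n\<rfloor>) n = 0 then \<infinity>
                     else ereal (- ln (Pj PM Ws PXZ Wc (nat \<lfloor>r * real n\<rfloor>) n) / real n))"
proof -
  define R where "R = ln (real CARD('x))"
  define \<kappa> where "\<kappa> = pf_eig (\<lambda>m m'. Ws m m' powr (1 - s))"
  obtain C1 C2 \<mu> where pos: "C1 > 0" "C2 > 0" "\<mu> > 0" and \<mu>: "(1 - s) * ln \<mu> \<le> s * H_cond_up Wc s"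
    and Pj: "\<And>k n. 0 \<le> Pj PM Ws PXZ Wc k n"
      "\<And>k n. Pj PM Ws PXZ Wc k n
         \<le> (C1 * \<kappa> ^ k) powr (1 / (1 - s)) * (C2 * \<mu> ^ n) / (real CARD('x) ^ n) powr (s / (1 - s))"
    unfolding \<kappa>_def by (rule Pj_le_geometric[OF assms(1-7) s]) blast
  have "\<kappa> > 0" unfolding \<kappa>_def using s assms(2,3)
    by (intro pf_eig_pos irreducible_powr) (auto intro: transition_matrix_nonneg)
  define L where "L = s / (1 - s) * R - 1 / (1 - s) * r * ln \<kappa> - ln \<mu>"
  define B where "B n = (C1 * \<kappa> ^ nat \<lfloor>r * real n\<rfloor>) powr (1 / (1 - s)) * (C2 * \<mu> ^ n)
    / (real CARD('x) ^ n) powr (s / (1 - s))" for n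
  have "(\<lambda>n. - ln (B n) / real n) \<longlonglongrightarrow> L"
    unfolding B_def L_def R_def
    by (rule neg_ln_geometric_bound_div_tendsto[OF pos(1) \<open>\<kappa> > 0\<close> pos(2,3) _ nat_floor_mult_div_tendsto[OF r]])
       simp
  then have "ereal L \<le> liminf (\<lambda>n. if Pj PM Ws PXZ Wc (nat \<lfloor>r * real n\<rfloor>) n = 0 then \<infinity>
                     else ereal (- ln (Pj PM Ws PXZ Wc (nat \<lfloor>r * real n\<rfloor>) n) / real n))"
    by (intro liminf_neg_ln_div_ge) (use Pj in \<open>auto simp: B_def\<close>)
  moreover have "(s * R - U_up Ws Wc r s) / (1 - s) \<le> L"
  proof -
    have "s * R - U_up Ws Wc r s \<le> s * R - r * ln \<kappa> - (1 - s) * ln \<mu>"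
      using \<mu> unfolding U_up_def theta_H_src_def \<kappa>_def by simp
    then have "(s * R - U_up Ws Wc r s) / (1 - s) \<le> (s * R - r * ln \<kappa> - (1 - s) * ln \<mu>) / (1 - s)"
      using s by (intro divide_right_mono) auto
    also have "\<dots> = L" using s by (simp add: L_def diff_divide_distrib)
    finally show ?thesis .
  qed
  ultimately show ?thesis unfolding R_def by (meson ereal_less_eq(3) order_trans)
qed

theorem mainTheorem14:
  fixes PM :: "'m::finite \<Rightarrow> real" and Ws :: "'m \<Rightarrow> 'm \<Rightarrow> real"
    and PXZ :: "'x::{finite,ab_group_add} \<times> 'z::finite \<Rightarrow> real"
    and Wc :: "'x \<times> 'z \<Rightarrow> 'x \<times> 'z \<Rightarrow> real"
    and r :: real
  assumes "prob_dist PM" "transition_matrix Ws" "irreducible_mat Ws" "aperiodic_mat Ws"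
    and "prob_dist PXZ" "transition_matrix Wc" "irreducible_mat Wc" "aperiodic_mat Wc"
    and "assumption2 Wc"
    and "r > 0"
    and "r * H_src_rate Ws + H_cond_rate Wc < ln (real CARD('x))"
  shows "liminf (\<lambda>n. if Pj PM Ws PXZ Wc (nat \<lfloor>r * real n\<rfloor>) n = 0 then \<infinity>
                     else ereal (- ln (Pj PM Ws PXZ Wc (nat \<lfloor>r * real n\<rfloor>) n) / real n))
         \<ge> (SUP s\<in>{0<..1/2}. ereal ((s * ln (real CARD('x)) - U_up Ws Wc r s) / (1 - s)))"
  using error_exponent_ge[OF assms(1-3,5-7,9,10)] by (auto intro: SUP_least)

end
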